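(* Assume Hypothesis (H2). Then for all $\varphi\in C^1_b(E)$ and all $z\in Q^{1/2}(H)$, the right-hand side below is continuous in $r<0$ and, for a suitable version of the conditional expectation (equality holding for almost every $r<0$ for any version), $$\mathbb E\big[z(\tau_x)\,\varphi\,\big|\,g=r\big]\,\rho(r)=-\int_{\{g\ge r\}}\Big(D\varphi(x)\cdot z-\langle Q^{-1/2}x,Q^{-1/2}z\rangle\,\varphi(x)\Big)\,\mu(dx)\qquad\text{for every }r<0.$$
   Context: Let $X(t)$, $t\in[0,1]$, be a Gaussian process whose law $\mu=N_Q$ is a non-degenerate centered Gaussian measure on $H=L^2(0,1)$, with $\mu(E)=1$ where $E=C([0,1])$ with the sup norm, and assume $Q^{1/2}(H)\subset E$. For $z\in Q^{1/2}(H)$, $\langle Q^{-1/2}x,Q^{-1/2}z\rangle$ denotes the $L^2(H,\mu)$-limit of $\sum_{h\le n}\lambda_h^{-1}\langle x,e_h\rangle\langle z,e_h\rangle$, where $Qe_h=\lambda_he_h$ with $(e_h)$ orthonormal basis. $C^1_b(E)$: bounded continuously Fréchet differentiable functions on $E$ with bounded derivative; $D\varphi(x)\cdot z$ is the directional derivative. Let $g(x):=\min_{t\in[0,1]}X(t)(x)$, $x\in E$. Hypothesis (H2): (i) the law of $g$ is absolutely continuous with respect to Lebesgue measure on $(-\infty,0]$, with density $\rho$; (ii) for $\mu$-a.e. $x\in E$ the path $X(\cdot)(x)$ attains its minimum $g(x)$ at a unique point $\tau_x\in[0,1]$, and $g$ has directional derivatives in all directions $z\in E$ given by $Dg(x)\cdot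 z=z(\tau_x)$ (and the chain rule $D(\theta(g))=\theta'(g)Dg$ for Lipschitz $\theta$ is available, so that the integration by parts formula of Proposition 4.2 applies to such functions). *)

theory Defs
  imports "HOL-Probability.Probability"
begin

text \<open>Elements of E are represented as functions real => real that are continuous
on [0,1] and vanish outside [0,1] (a canonical normalisation).\<close>

definition C01 :: "(real \<Rightarrow> real) set" where
  "C01 = {x. continuous_on {0..1} x \<and> (\<forall>t. t \<notin> {0..1} \<longrightarrow> x t = 0)}"

definition supn :: "(real \<Rightarrow> real) \<Rightarrow> real" where
  "supn x = (SUP t\<in>{0..1}. \<bar>x t\<bar>)"

text \<open>Borel sigma-algebra of E (generated by the evaluations t |-> x t).\<close>
definition E_sets :: "(real \<Rightarrow> real) measure" where
  "E_sets = restrict_space (Pi\<^sub>M UNIV (\<lambda>_::real. borel)) C01"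

definition sqint01 :: "(real \<Rightarrow> real) \<Rightarrow> bool" where
  "sqint01 f \<longleftrightarrow> f \<in> borel_measurable borel \<and> set_integrable lborel {0..1} (\<lambda>t. (f t)\<^sup>2)"

definition l2inner :: "(real \<Rightarrow> real) \<Rightarrow> (real \<Rightarrow> real) \<Rightarrow> real" where
  "l2inner f h = (LINT t:{0..1}|lborel. f t * h t)"

text \<open>(e k) orthonormal basis of L2(0,1), Q e_k = lam k e_k, Q non-degenerate trace class.\<close>
definition covariance_data :: "(nat \<Rightarrow> real \<Rightarrow> real) \<Rightarrow> (nat \<Rightarrow> real) \<Rightarrow> bool" where
  "covariance_data e lam \<longleftrightarrow>
     (\<forall>k. sqint01 (e k)) \<and>
     (\<forall>j k. l2inner (e j) (e k) = (if j = k then 1 else 0)) \<and>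
     (\<forall>f. sqint01 f \<longrightarrow> (\<lambda>k. (l2inner f (e k))\<^sup>2) sums (LINT t:{0..1}|lborel. (f t)\<^sup>2)) \<and>
     (\<forall>k. lam k > 0) \<and> summable lam"

definition Qform :: "(nat \<Rightarrow> real \<Rightarrow> real) \<Rightarrow> (nat \<Rightarrow> real) \<Rightarrow> (real \<Rightarrow> real) \<Rightarrow> real" where
  "Qform e lam h = (\<Sum>k. lam k * (l2inner h (e k))\<^sup>2)"

text \<open>mu is (the restriction to E of) the centered Gaussian measure N_Q on H = L2(0,1),
  with mu(E) = 1: characterised by its characteristic functional.\<close>
definition gaussian_on_E :: "(real \<Rightarrow> real) measure \<Rightarrow> (nat \<Rightarrow> real \<Rightarrow> real) \<Rightarrow> (nat \<Rightarrow> real) \<Rightarrow> bool" where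
  "gaussian_on_E \<mu> e lam \<longleftrightarrow>
     prob_space \<mu> \<and> space \<mu> = C01 \<and> sets \<mu> = sets E_sets \<and>
     (\<forall>h. sqint01 h \<longrightarrow>
        (CLINT x|\<mu>. cis (l2inner x h)) = complex_of_real (exp (- Qform e lam h / 2)))"

text \<open>Q^{1/2}(H) (Cameron-Martin space), elements represented by their continuous version.\<close>
definition CM :: "(nat \<Rightarrow> real \<Rightarrow> real) \<Rightarrow> (nat \<Rightarrow> real) \<Rightarrow> (real \<Rightarrow> real) set" where
  "CM e lam = {z \<in> C01. summable (\<lambda>k. (l2inner z (e k))\<^sup>2 / lam k)}"

text \<open>Hypothesis Q^{1/2}(H) \<subseteq> E.\<close>
definition CM_in_E :: "(nat \<Rightarrow> real \<Rightarrow> real) \<Rightarrow> (nat \<Rightarrow> real) \<Rightarrow> bool" where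
  "CM_in_E e lam \<longleftrightarrow>
     (\<forall>f. sqint01 f \<and> summable (\<lambda>k. (l2inner f (e k))\<^sup>2 / lam k) \<longrightarrow>
        (\<exists>y\<in>C01. AE t in lborel. t \<in> {0..1} \<longrightarrow> f t = y t))"

definition QWpart :: "(nat \<Rightarrow> real \<Rightarrow> real) \<Rightarrow> (nat \<Rightarrow> real) \<Rightarrow> (real \<Rightarrow> real) \<Rightarrow> nat \<Rightarrow> (real \<Rightarrow> real) \<Rightarrow> real" where
  "QWpart e lam z n x = (\<Sum>h\<le>n. l2inner x (e h) * l2inner z (e h) / lam h)"

text \<open>W is (a version of) <Q^{-1/2}x, Q^{-1/2}z>, the L2(mu)-limit of the partial sums.\<close>
definition is_QW :: "(real \<Rightarrow> real) measure \<Rightarrow> (nat \<Rightarrow> real \<Rightarrow> real) \<Rightarrow> (nat \<Rightarrow> real)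
     \<Rightarrow> (real \<Rightarrow> real) \<Rightarrow> ((real \<Rightarrow> real) \<Rightarrow> real) \<Rightarrow> bool" where
  "is_QW \<mu> e lam z W \<longleftrightarrow>
     W \<in> borel_measurable \<mu> \<and> integrable \<mu> (\<lambda>x. (W x)\<^sup>2) \<and>
     (\<lambda>n. \<integral>x. (QWpart e lam z n x - W x)\<^sup>2 \<partial>\<mu>) \<longlonglongrightarrow> 0"

definition C1b :: "((real \<Rightarrow> real) \<Rightarrow> real) \<Rightarrow> ((real \<Rightarrow> real) \<Rightarrow> (real \<Rightarrow> real) \<Rightarrow> real) \<Rightarrow> bool" where
  "C1b \<phi> D\<phi> \<longleftrightarrow>
     (\<exists>B. \<forall>x\<in>C01. \<bar>\<phi> x\<bar> \<le> B) \<and>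
     (\<forall>x\<in>C01. \<forall>z\<in>C01. \<forall>w\<in>C01. \<forall>a b.
        D\<phi> x (\<lambda>t. a * z t + b * w t) = a * D\<phi> x z + b * D\<phi> x w) \<and>
     (\<exists>C. \<forall>x\<in>C01. \<forall>z\<in>C01. \<bar>D\<phi> x z\<bar> \<le> C * supn z) \<and>
     (\<forall>x\<in>C01. \<forall>\<epsilon>>0. \<exists>\<delta>>0. \<forall>h\<in>C01. supn h < \<delta> \<longrightarrow>
        \<bar>\<phi> (\<lambda>t. x t + h t) - \<phi> x - D\<phi> x h\<bar> \<le> \<epsilon> * supn h) \<and>
     (\<forall>x\<in>C01. \<forall>\<epsilon>>0. \<exists>\<delta>>0. \<forall>y\<in>C01. supn (\<lambda>t. y t - x t) < \<delta> \<longrightarrow>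
        (\<forall>z\<in>C01. \<bar>D\<phi> y z - D\<phi> x z\<bar> \<le> \<epsilon> * supn z))"

definition gmin :: "(real \<Rightarrow> real) \<Rightarrow> real" where
  "gmin x = (INF t\<in>{0..1}. x t)"

definition tau :: "(real \<Rightarrow> real) \<Rightarrow> real" where
  "tau x = (if \<exists>!t. t \<in> {0..1} \<and> x t = gmin x then (THE t. t \<in> {0..1} \<and> x t = gmin x) else 0)"

definition H2 :: "(real \<Rightarrow> real) measure \<Rightarrow> (nat \<Rightarrow> real \<Rightarrow> real) \<Rightarrow> (nat \<Rightarrow> real) \<Rightarrow> (real \<Rightarrow> real) \<Rightarrow> bool" where
  "H2 \<mu> e lam \<rho> \<longleftrightarrow>
     \<comment> \<open>(i) law of g restricted to (-infinity,0] has Lebesgue density rho\<close>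
     \<rho> \<in> borel_measurable borel \<and> (\<forall>r. \<rho> r \<ge> 0) \<and>
     (\<forall>A\<in>sets borel. A \<subseteq> {..0} \<longrightarrow>
        emeasure \<mu> {x\<in>space \<mu>. gmin x \<in> A} = (\<integral>\<^sup>+ r. ennreal (\<rho> r) * indicator A r \<partial>lborel)) \<and>
     \<comment> \<open>(ii) a.e. unique minimiser and directional derivatives Dg(x).z = z(tau_x)\<close>
     (AE x in \<mu>. (\<exists>!t. t \<in> {0..1} \<and> x t = gmin x) \<and>
        (\<forall>z\<in>C01. ((\<lambda>s. gmin (\<lambda>t. x t + s * z t)) has_real_derivative z (tau x)) (at 0))) \<and>
     \<comment> \<open>chain rule D(theta(g)) = theta'(g) Dg for Lipschitz theta, so that the integration
        by parts formula (Prop. 4.2) applies to psi * theta(g), psi in C^1_b(E)\<close>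
     (\<forall>\<psi> D\<psi> \<theta> \<theta>' N z W L. C1b \<psi> D\<psi> \<longrightarrow> z \<in> CM e lam \<longrightarrow> is_QW \<mu> e lam z W \<longrightarrow>
        L-lipschitz_on UNIV \<theta> \<longrightarrow> \<theta>' \<in> borel_measurable borel \<longrightarrow>
        N \<in> null_sets lborel \<longrightarrow> (\<forall>s. s \<notin> N \<longrightarrow> (\<theta> has_real_derivative \<theta>' s) (at s)) \<longrightarrow>
        (AE x in \<mu>. gmin x \<notin> N) \<longrightarrow>
        (\<integral>x. D\<psi> x z * \<theta> (gmin x) + \<psi> x * \<theta>' (gmin x) * z (tau x) \<partial>\<mu>)
          = (\<integral>x. W x * \<psi> x * \<theta> (gmin x) \<partial>\<mu>))"

text \<open>c is a version of r |-> E[Y | g = r], i.e. c o g is a version of E[Y | sigma(g)].\<close>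
definition cond_exp_version :: "(real \<Rightarrow> real) measure \<Rightarrow> ((real \<Rightarrow> real) \<Rightarrow> real) \<Rightarrow> (real \<Rightarrow> real) \<Rightarrow> bool" where
  "cond_exp_version \<mu> Y c \<longleftrightarrow>
     c \<in> borel_measurable borel \<and> integrable \<mu> (\<lambda>x. c (gmin x)) \<and>
     (\<forall>A\<in>sets borel. (LINT x:{x\<in>space \<mu>. gmin x \<in> A}|\<mu>. Y x)
                    = (LINT x:{x\<in>space \<mu>. gmin x \<in> A}|\<mu>. c (gmin x)))"

end

theory Submission
  imports Defs
begin

text \<open>Regularise the indicator of \<open>{b < g < 0}\<close> by the Lipschitz function
  \<open>ramp b = min (max \<cdot> b) 0\<close>, whose derivative is the indicator of \<open>(b, 0)\<close>. The integration by
  parts formula of (H2), applied to \<open>\<phi> \<cdot> ramp b (g)\<close>, gives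
  \<open>E[1{b<g<0} z(\<tau>) \<phi>] = - E[f \<cdot> ramp b (g)]\<close> with \<open>f = D\<phi>\<cdot>z - \<langle>Q^{-1/2}x, Q^{-1/2}z\<rangle> \<phi>\<close>. Since
  \<open>-ramp b s = \<integral>\<^sub>b\<^sup>0 1{s < r} dr\<close>, Fubini turns the right-hand side into \<open>\<integral>\<^sub>b\<^sup>0 F(r) dr\<close>, where
  \<open>F(r) = E[f; g < r] = -E[f; g \<ge> r]\<close> because \<open>E f = 0\<close> (integration by parts with \<open>\<theta> = 1\<close>).
  The left-hand side equals \<open>\<integral>\<^sub>b\<^sup>0 c \<rho>\<close> for every version \<open>c\<close> of the conditional expectation, and
  integrals over all intervals \<open>(b, 0)\<close> determine a function a.e., so \<open>c \<rho> = F\<close> a.e. on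
  \<open>(-\<infinity>, 0)\<close>. As \<open>g\<close> has no atoms there, \<open>F\<close> is continuous, and redefining \<open>c\<close> and \<open>\<rho>\<close> on
  null sets makes the identity hold at every \<open>r < 0\<close>.\<close>

section \<open>Measurability of sup-norm continuous functionals\<close>

lemma space_E_sets: "space E_sets = C01"
  by (simp add: E_sets_def space_restrict_space space_PiM PiE_UNIV_domain)

lemma measurable_eval_E_sets [measurable]: "(\<lambda>x. x t) \<in> borel_measurable E_sets"
  unfolding E_sets_def by (intro measurable_restrict_space1) simp

lemma C01_continuous_on: "x \<in> C01 \<Longrightarrow> continuous_on {0..1} x"
  by (simp add: C01_def)

lemma C01_diff: "x \<in> C01 \<Longrightarrow> y \<in> C01 \<Longrightarrow> (\<lambda>t. y t - x t) \<in> C01"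
  by (auto simp: C01_def intro!: continuous_intros)

lemma C01_borel_measurable: "z \<in> C01 \<Longrightarrow> z \<in> borel_measurable borel"
proof -
  assume z: "z \<in> C01"
  have "(\<lambda>t. indicator {0..1} t *\<^sub>R z t) \<in> borel_measurable borel"
    using z by (intro borel_measurable_continuous_on_indicator) (auto simp: C01_def)
  moreover have "(\<lambda>t. indicator {0..1} t *\<^sub>R z t) = z"
    using z by (auto simp: C01_def fun_eq_iff indicator_def)
  ultimately show ?thesis by simp
qed

lemma abs_le_supn: "x \<in> C01 \<Longrightarrow> t \<in> {0..1} \<Longrightarrow> \<bar>x t\<bar> \<le> supn x"
proof -
  assume x: "x \<in> C01" and t: "t \<in> {0..1}"
  have "continuous_on {0..1} (\<lambda>t. \<bar>x t\<bar>)"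
    using x by (auto simp: C01_def intro!: continuous_intros)
  then have "compact ((\<lambda>t. \<bar>x t\<bar>) ` {0..1})" by (intro compact_continuous_image) auto
  then have "bdd_above ((\<lambda>t. \<bar>x t\<bar>) ` {0..1})" by (intro bounded_imp_bdd_above compact_imp_bounded)
  then show ?thesis unfolding supn_def using t by (rule cSUP_upper[rotated])
qed

lemma supn_le: "(\<And>t. t \<in> {0..1} \<Longrightarrow> \<bar>x t\<bar> \<le> K) \<Longrightarrow> supn x \<le> K"
  unfolding supn_def by (rule cSUP_least) auto

lemma supn_nonneg: "x \<in> C01 \<Longrightarrow> 0 \<le> supn x"
  using abs_le_supn[of x 0] by force

text \<open>\<open>grid_bernstein n (grid_floor n x)\<close> is the Bernstein polynomial of \<open>x\<close> with its nodal
  values rounded down to the grid \<open>\<int>/n\<close>. It converges uniformly to \<open>x\<close>, and as a function of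
  \<open>x\<close> it factors through a countable set, hence is measurable.\<close>

definition grid_bernstein :: "nat \<Rightarrow> int list \<Rightarrow> real \<Rightarrow> real" where
  "grid_bernstein n l =
     (\<lambda>t. if t \<in> {0..1} then \<Sum>k\<le>n. (of_int (l!k) / real n) * Bernstein n k t else 0)"

definition grid_floor :: "nat \<Rightarrow> (real \<Rightarrow> real) \<Rightarrow> int list" where
  "grid_floor n x = map (\<lambda>k. \<lfloor>real n * x (real k / real n)\<rfloor>) [0..<Suc n]"

lemma grid_bernstein_C01: "grid_bernstein n l \<in> C01"
proof -
  have "continuous_on {0..1} (\<lambda>t. \<Sum>k\<le>n. (of_int (l!k) / real n) * Bernstein n k t)"
    unfolding Bernstein_def by (intro continuous_intros)
  then have "continuous_on {0..1} (grid_bernstein n l)"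
    by (rule continuous_on_eq) (simp add: grid_bernstein_def)
  then show ?thesis by (simp add: C01_def grid_bernstein_def)
qed

lemma measurable_grid_floor: "grid_floor n \<in> measurable E_sets (count_space UNIV)"
proof (subst measurable_count_space_eq2_countable, safe)
  fix l :: "int list"
  have "\<And>x. grid_floor n x = l \<longleftrightarrow>
      length l = Suc n \<and> (\<forall>k<Suc n. \<lfloor>real n * x (real k / real n)\<rfloor> = l!k)"
    unfolding grid_floor_def list_eq_iff_nth_eq by (auto simp del: upt_Suc simp add: nth_map)
  then have "grid_floor n -` {l} \<inter> space E_sets = {x \<in> space E_sets. length l = Suc n \<and>
      (\<forall>k<Suc n. of_int (l!k) \<le> real n * x (real k / real n) \<and>
                 real n * x (real k / real n) < of_int (l!k) + 1)}"
    by (auto simp: floor_eq_iff)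
  also have "\<dots> \<in> sets E_sets" by measurable
  finally show "grid_floor n -` {l} \<inter> space E_sets \<in> sets E_sets" .
qed auto

lemma grid_floor_rounding_error:
  assumes "0 < m" "k \<le> m"
  shows "\<bar>of_int (grid_floor m x ! k) / real m - x (k / m)\<bar> \<le> 1 / real m"
proof -
  define u where "u = real m * x (real k / real m)"
  have "grid_floor m x ! k = \<lfloor>u\<rfloor>"
    using assms by (simp add: grid_floor_def u_def nth_map less_Suc_eq_le del: upt_Suc)
  moreover have "of_int \<lfloor>u\<rfloor> / real m - x (k / m) = (of_int \<lfloor>u\<rfloor> - u) / real m"
    using assms by (simp add: u_def field_simps)
  moreover have "\<bar>of_int \<lfloor>u\<rfloor> - u\<bar> \<le> 1" by linarith
  ultimately show ?thesis using assms by (simp add: divide_right_mono)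
qed

lemma supn_grid_bernstein_diff_le:
  assumes "0 < m" and K: "\<And>t. t \<in> {0..1} \<Longrightarrow> \<bar>x t - (\<Sum>k\<le>m. x (k/m) * Bernstein m k t)\<bar> \<le> K"
  shows "supn (\<lambda>t. grid_bernstein m (grid_floor m x) t - x t) \<le> 1 / real m + K"
proof (rule supn_le)
  fix t :: real assume t: "t \<in> {0..1}"
  define err where "err k = of_int (grid_floor m x ! k) / real m - x (k/m)" for k
  have "\<bar>\<Sum>k\<le>m. err k * Bernstein m k t\<bar> \<le> (\<Sum>k\<le>m. \<bar>err k * Bernstein m k t\<bar>)"
    by (rule sum_abs)
  also have "\<dots> \<le> (\<Sum>k\<le>m. (1 / real m) * Bernstein m k t)"
  proof (rule sum_mono)
    fix k assume "k \<in> {..m}"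
    then have "\<bar>err k\<bar> \<le> 1 / real m"
      unfolding err_def by (intro grid_floor_rounding_error[OF \<open>0 < m\<close>]) simp
    then show "\<bar>err k * Bernstein m k t\<bar> \<le> (1 / real m) * Bernstein m k t"
      using Bernstein_nonneg[of t m k] t mult_right_mono[of "\<bar>err k\<bar>" "1 / real m"]
      by (auto simp: abs_mult)
  qed
  also have "\<dots> = 1 / real m"
    by (simp only: sum_distrib_left[symmetric] sum_Bernstein)
  finally have "\<bar>\<Sum>k\<le>m. err k * Bernstein m k t\<bar> \<le> 1 / real m" .
  moreover have "grid_bernstein m (grid_floor m x) t - x t =
      (\<Sum>k\<le>m. err k * Bernstein m k t) - (x t - (\<Sum>k\<le>m. x (k/m) * Bernstein m k t))"
    using t by (simp add: grid_bernstein_def err_def algebra_simps sum_subtractf)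
  ultimately show "\<bar>grid_bernstein m (grid_floor m x) t - x t\<bar> \<le> 1 / real m + K"
    using K[OF t] by linarith
qed

lemma eventually_supn_grid_bernstein_diff_less:
  assumes "x \<in> C01" "0 < d"
  shows "eventually (\<lambda>m. supn (\<lambda>t. grid_bernstein m (grid_floor m x) t - x t) < d) sequentially"
proof -
  from Bernstein_Weierstrass[OF C01_continuous_on[OF \<open>x \<in> C01\<close>], of "d/2"] \<open>0 < d\<close>
  obtain N1 where N1: "\<And>m t. N1 \<le> m \<Longrightarrow> t \<in> {0..1} \<Longrightarrow>
      \<bar>x t - (\<Sum>k\<le>m. x (k/m) * Bernstein m k t)\<bar> < d/2"
    by auto
  obtain N2 :: nat where N2: "2 / d < real N2" using reals_Archimedean2 by blast
  show ?thesis
    unfolding eventually_sequentially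
  proof (intro exI allI impI)
    fix m assume m: "max (Suc N1) N2 \<le> m"
    then have "0 < m" by simp
    have "1 / real m < d/2"
      using m N2 \<open>0 < d\<close> by (simp add: field_simps) (smt (verit) of_nat_le_iff mult_less_cancel_left_pos)
    moreover have "supn (\<lambda>t. grid_bernstein m (grid_floor m x) t - x t) \<le> 1 / real m + d/2"
      using N1 m by (intro supn_grid_bernstein_diff_le[OF \<open>0 < m\<close>] less_imp_le) auto
    ultimately show "supn (\<lambda>t. grid_bernstein m (grid_floor m x) t - x t) < d" by linarith
  qed
qed

lemma borel_measurable_E_sets_sup_continuous:
  fixes f :: "(real \<Rightarrow> real) \<Rightarrow> real"
  assumes cont: "\<And>x e. x \<in> C01 \<Longrightarrow> 0 < e \<Longrightarrow>
      \<exists>d>0. \<forall>y\<in>C01. supn (\<lambda>t. y t - x t) < d \<longrightarrow> \<bar>f y - f x\<bar> < e"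
  shows "f \<in> borel_measurable E_sets"
proof (rule borel_measurable_LIMSEQ_real[where u="\<lambda>n x. f (grid_bernstein n (grid_floor n x))"])
  fix n
  show "(\<lambda>x. f (grid_bernstein n (grid_floor n x))) \<in> borel_measurable E_sets"
    using measurable_compose[OF measurable_grid_floor
        borel_measurable_count_space[of "\<lambda>l. f (grid_bernstein n l)"]]
    by simp
next
  fix x assume "x \<in> space E_sets"
  then have x: "x \<in> C01" by (simp add: space_E_sets)
  show "(\<lambda>n. f (grid_bernstein n (grid_floor n x))) \<longlonglongrightarrow> f x"
  proof (rule tendstoI)
    fix e :: real assume "0 < e"
    with cont[OF x] obtain d where "0 < d"
      and d: "\<And>y. y \<in> C01 \<Longrightarrow> supn (\<lambda>t. y t - x t) < d \<Longrightarrow> \<bar>f y - f x\<bar> < e"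
      by blast
    from eventually_supn_grid_bernstein_diff_less[OF x \<open>0 < d\<close>]
    show "eventually (\<lambda>n. dist (f (grid_bernstein n (grid_floor n x))) (f x) < e) sequentially"
      by eventually_elim (simp add: dist_real_def d grid_bernstein_C01)
  qed
qed

section \<open>The minimum and its minimiser\<close>

text \<open>The interval is clamped to \<open>[0, 1]\<close> so that \<open>partial_min a b\<close> is measurable for all
  real \<open>a\<close> and \<open>b\<close>, which the countable unions over rationals below need.\<close>

definition partial_min :: "real \<Rightarrow> real \<Rightarrow> (real \<Rightarrow> real) \<Rightarrow> real" where
  "partial_min a b x = (INF t\<in>{max 0 a..min 1 b}. x t)"

lemma gmin_eq_partial_min: "gmin x = partial_min 0 1 x"
  by (simp add: gmin_def partial_min_def)

lemma
  assumes "x \<in> C01" and "max 0 a \<le> min 1 b"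
  shows partial_min_le: "t \<in> {max 0 a..min 1 b} \<Longrightarrow> partial_min a b x \<le> x t"
    and partial_min_attained: "\<exists>t\<in>{max 0 a..min 1 b}. x t = partial_min a b x"
proof -
  have cont: "continuous_on {max 0 a..min 1 b} x"
    using C01_continuous_on[OF \<open>x \<in> C01\<close>] by (rule continuous_on_subset) auto
  then have "compact (x ` {max 0 a..min 1 b})" by (intro compact_continuous_image) auto
  then have bdd: "bdd_below (x ` {max 0 a..min 1 b})"
    by (intro bounded_imp_bdd_below compact_imp_bounded)
  show "t \<in> {max 0 a..min 1 b} \<Longrightarrow> partial_min a b x \<le> x t"
    unfolding partial_min_def by (rule cINF_lower[OF bdd])
  from continuous_attains_inf[OF compact_Icc _ cont] \<open>max 0 a \<le> min 1 b\<close>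
  obtain t where t: "t \<in> {max 0 a..min 1 b}" "\<And>s. s \<in> {max 0 a..min 1 b} \<Longrightarrow> x t \<le> x s"
    by auto
  have "partial_min a b x = x t" unfolding partial_min_def
    by (rule antisym) (auto intro!: cINF_lower[OF bdd] cINF_greatest t)
  with t show "\<exists>t\<in>{max 0 a..min 1 b}. x t = partial_min a b x" by auto
qed

lemma gmin_le: "x \<in> C01 \<Longrightarrow> t \<in> {0..1} \<Longrightarrow> gmin x \<le> x t"
  using partial_min_le[of x 0 1 t] by (simp add: gmin_eq_partial_min)

lemma gmin_attained: "x \<in> C01 \<Longrightarrow> \<exists>t\<in>{0..1}. x t = gmin x"
  using partial_min_attained[of x 0 1] by (simp add: gmin_eq_partial_min)

lemma partial_min_eq_gmin_iff:
  assumes "x \<in> C01" and "max 0 a \<le> min 1 b"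
  shows "partial_min a b x = gmin x \<longleftrightarrow> (\<exists>t\<in>{max 0 a..min 1 b}. x t = gmin x)"
proof
  assume "partial_min a b x = gmin x"
  then show "\<exists>t\<in>{max 0 a..min 1 b}. x t = gmin x"
    using partial_min_attained[OF assms] by simp
next
  assume "\<exists>t\<in>{max 0 a..min 1 b}. x t = gmin x"
  then obtain t where t: "t \<in> {max 0 a..min 1 b}" "x t = gmin x" by blast
  obtain s where s: "s \<in> {max 0 a..min 1 b}" "x s = partial_min a b x"
    using partial_min_attained[OF assms] by blast
  show "partial_min a b x = gmin x"
    using partial_min_le[OF assms t(1)] gmin_le[OF \<open>x \<in> C01\<close>, of s] s t by auto
qed

lemma partial_min_lipschitz:
  assumes x: "x \<in> C01" and y: "y \<in> C01"
  shows "\<bar>partial_min a b y - partial_min a b x\<bar> \<le> supn (\<lambda>t. y t - x t)"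
proof (cases "max 0 a \<le> min 1 b")
  case True
  have close: "\<bar>y t - x t\<bar> \<le> supn (\<lambda>t. y t - x t)" if "t \<in> {max 0 a..min 1 b}" for t
    using abs_le_supn[OF C01_diff[OF x y], of t] that by auto
  have "partial_min a b x - supn (\<lambda>t. y t - x t) \<le> partial_min a b y"
    unfolding partial_min_def[of a b y]
  proof (rule cINF_greatest)
    fix t assume "t \<in> {max 0 a..min 1 b}"
    then show "partial_min a b x - supn (\<lambda>t. y t - x t) \<le> y t"
      using close[of t] partial_min_le[OF x True, of t] by (auto simp: abs_le_iff)
  qed (use True in simp)
  moreover have "partial_min a b y - supn (\<lambda>t. y t - x t) \<le> partial_min a b x"
    unfolding partial_min_def[of a b x]
  proof (rule cINF_greatest)
    fix t assume "t \<in> {max 0 a..min 1 b}"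
    then show "partial_min a b y - supn (\<lambda>t. y t - x t) \<le> x t"
      using close[of t] partial_min_le[OF y True, of t] by (auto simp: abs_le_iff)
  qed (use True in simp)
  ultimately show ?thesis by linarith
next
  case False
  then show ?thesis
    using supn_nonneg[OF C01_diff[OF x y]] by (simp add: partial_min_def)
qed

lemma measurable_partial_min [measurable]: "partial_min a b \<in> borel_measurable E_sets"
proof (rule borel_measurable_E_sets_sup_continuous)
  fix x e assume "x \<in> C01" "0 < (e::real)"
  then show "\<exists>d>0. \<forall>y\<in>C01. supn (\<lambda>t. y t - x t) < d \<longrightarrow> \<bar>partial_min a b y - partial_min a b x\<bar> < e"
    using partial_min_lipschitz[OF \<open>x \<in> C01\<close>] by (intro exI[of _ e]) (auto intro: le_less_trans)
qed

lemma measurable_gmin [measurable]: "gmin \<in> borel_measurable E_sets"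
  unfolding gmin_eq_partial_min[abs_def] by measurable

lemma measurable_partial_min_eq_gmin [measurable]:
  "Measurable.pred E_sets (\<lambda>x. partial_min a b x = gmin x)"
  unfolding pred_def by (rule borel_measurable_eq) measurable

definition unique_argmin :: "(real \<Rightarrow> real) \<Rightarrow> bool" where
  "unique_argmin x \<longleftrightarrow> (\<exists>!t. t \<in> {0..1} \<and> x t = gmin x)"

lemma two_argmins_if_not_unique_argmin:
  assumes "x \<in> C01" and "\<not> unique_argmin x"
  obtains s1 s2 where "s1 \<in> {0..1}" "s2 \<in> {0..1}" "x s1 = gmin x" "x s2 = gmin x" "s1 < s2"
proof -
  obtain t where t: "t \<in> {0..1}" "x t = gmin x" using gmin_attained[OF assms(1)] by blast
  with assms(2) obtain t' where t': "t' \<in> {0..1}" "x t' = gmin x" "t' \<noteq> t"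
    unfolding unique_argmin_def by blast
  show ?thesis
  proof (cases "t < t'")
    case True
    then show ?thesis using that[of t t'] t t' by blast
  next
    case False
    then have "t' < t" using \<open>t' \<noteq> t\<close> by linarith
    then show ?thesis using that[of t' t] t t' by blast
  qed
qed

text \<open>Two distinct minimisers are separated by two rationals, which makes non-uniqueness a
  countable union of measurable events.\<close>

lemma not_unique_argmin_iff:
  assumes x: "x \<in> C01"
  shows "\<not> unique_argmin x \<longleftrightarrow> (\<exists>q1 q2::rat. 0 \<le> q1 \<and> q1 < q2 \<and> q2 \<le> 1 \<and>
      partial_min 0 (of_rat q1) x = gmin x \<and> partial_min (of_rat q2) 1 x = gmin x)"
proof
  assume "\<not> unique_argmin x"
  then obtain s1 s2 where s: "s1 \<in> {0..1}" "s2 \<in> {0..1}" "x s1 = gmin x" "x s2 = gmin x" "s1 < s2"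
    using two_argmins_if_not_unique_argmin[OF x] by blast
  obtain q1 where q1: "q1 \<in> \<rat>" "s1 < q1" "q1 < s2" using Rats_dense_in_real[OF s(5)] by blast
  obtain q2 where q2: "q2 \<in> \<rat>" "q1 < q2" "q2 < s2" using Rats_dense_in_real[OF q1(3)] by blast
  from q1(1) q2(1) obtain r1 r2 where r: "q1 = of_rat r1" "q2 = of_rat r2"
    by (auto elim!: Rats_cases)
  have "partial_min 0 q1 x = gmin x"
    using s q1 by (subst partial_min_eq_gmin_iff[OF x]) (auto intro!: bexI[of _ s1])
  moreover have "partial_min q2 1 x = gmin x"
    using s q2 by (subst partial_min_eq_gmin_iff[OF x]) (auto intro!: bexI[of _ s2])
  moreover have "(0::real) \<le> of_rat r1" "(of_rat r1::real) < of_rat r2" "(of_rat r2::real) \<le> 1"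
    using s q1 q2 unfolding r atLeastAtMost_iff by linarith+
  then have "0 \<le> r1" "r1 < r2" "r2 \<le> 1" by (simp_all add: of_rat_less)
  ultimately show "\<exists>q1 q2::rat. 0 \<le> q1 \<and> q1 < q2 \<and> q2 \<le> 1 \<and>
      partial_min 0 (of_rat q1) x = gmin x \<and> partial_min (of_rat q2) 1 x = gmin x"
    using r by blast
next
  assume "\<exists>q1 q2::rat. 0 \<le> q1 \<and> q1 < q2 \<and> q2 \<le> 1 \<and>
      partial_min 0 (of_rat q1) x = gmin x \<and> partial_min (of_rat q2) 1 x = gmin x"
  then obtain r1 r2 :: rat where r: "0 \<le> r1" "r1 < r2" "r2 \<le> 1"
      "partial_min 0 (of_rat r1) x = gmin x" "partial_min (of_rat r2) 1 x = gmin x"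
    by blast
  define q1 q2 :: real where "q1 = of_rat r1" and "q2 = of_rat r2"
  have q: "0 \<le> q1" "q1 < q2" "q2 \<le> 1"
    using r by (simp_all add: q1_def q2_def of_rat_less)
  obtain t1 t2 where t: "t1 \<in> {0..q1}" "t2 \<in> {q2..1}" "x t1 = gmin x" "x t2 = gmin x"
    using q r partial_min_eq_gmin_iff[OF x, of 0 q1] partial_min_eq_gmin_iff[OF x, of q2 1]
    by (auto simp: q1_def q2_def)
  show "\<not> unique_argmin x"
  proof
    assume "unique_argmin x"
    then obtain t0 where "\<And>t. t \<in> {0..1} \<Longrightarrow> x t = gmin x \<Longrightarrow> t = t0"
      unfolding unique_argmin_def by blast
    then have "t1 = t0" "t2 = t0" using t q by auto
    then show False using t q by auto
  qed
qed

lemma measurable_unique_argmin [measurable]: "Measurable.pred E_sets unique_argmin"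
proof -
  have "Measurable.pred E_sets (\<lambda>x. \<not> (\<exists>q1 q2::rat. 0 \<le> q1 \<and> q1 < q2 \<and> q2 \<le> 1 \<and>
      partial_min 0 (of_rat q1) x = gmin x \<and> partial_min (of_rat q2) 1 x = gmin x))"
    by measurable
  then show ?thesis
  proof (rule measurable_cong[THEN iffD1, rotated])
    fix x assume "x \<in> space E_sets"
    then show "(\<not> (\<exists>q1 q2::rat. 0 \<le> q1 \<and> q1 < q2 \<and> q2 \<le> 1 \<and> partial_min 0 (of_rat q1) x = gmin x
        \<and> partial_min (of_rat q2) 1 x = gmin x)) \<longleftrightarrow> unique_argmin x"
      using not_unique_argmin_iff by (auto simp: space_E_sets)
  qed
qed

lemma tau_unique_argmin:
  assumes "unique_argmin x"
  shows "tau x \<in> {0..1}" and "x (tau x) = gmin x"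
    and "\<And>t. t \<in> {0..1} \<Longrightarrow> x t = gmin x \<Longrightarrow> t = tau x"
proof -
  have ex1: "\<exists>!t. t \<in> {0..1} \<and> x t = gmin x"
    using assms by (simp add: unique_argmin_def)
  then have tau: "tau x = (THE t. t \<in> {0..1} \<and> x t = gmin x)"
    by (simp add: tau_def)
  show "tau x \<in> {0..1}" "x (tau x) = gmin x"
    using theI'[OF ex1] unfolding tau by simp_all
  fix t assume "t \<in> {0..1}" "x t = gmin x"
  then show "t = tau x"
    unfolding tau by (intro the1_equality[OF ex1, symmetric]) simp
qed

lemma tau_in_unit_interval: "tau x \<in> {0..1}"
proof (cases "unique_argmin x")
  case False
  then show ?thesis by (simp add: tau_def unique_argmin_def)
qed (rule tau_unique_argmin)

lemma tau_le_iff: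
  assumes x: "x \<in> C01"
  shows "tau x \<le> a \<longleftrightarrow> 0 \<le> a \<and> (\<not> unique_argmin x \<or> 1 \<le> a \<or> partial_min 0 a x = gmin x)"
proof (cases "unique_argmin x")
  case False
  then have "tau x = 0" by (simp add: tau_def unique_argmin_def)
  with False show ?thesis by simp
next
  case True
  note tau = tau_unique_argmin[OF True]
  consider "a < 0" | "1 \<le> a" | "0 \<le> a" "a < 1" by linarith
  then show ?thesis
  proof cases
    case 3
    have "partial_min 0 a x = gmin x \<longleftrightarrow> (\<exists>t\<in>{0..a}. x t = gmin x)"
      using partial_min_eq_gmin_iff[OF x, of 0 a] 3 by (simp add: min_def)
    also have "\<dots> \<longleftrightarrow> tau x \<le> a"
    proof
      assume "\<exists>t\<in>{0..a}. x t = gmin x"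
      then obtain t where "t \<in> {0..a}" "x t = gmin x" by blast
      then show "tau x \<le> a" using tau(3)[of t] 3 by auto
    qed (use tau(1,2) in auto)
    finally show ?thesis using 3 True by auto
  qed (use tau(1) in auto)
qed

lemma measurable_tau [measurable]: "tau \<in> borel_measurable E_sets"
proof (subst borel_measurable_iff_le, intro allI)
  fix a
  have "{x \<in> space E_sets. tau x \<le> a} = {x \<in> space E_sets.
      0 \<le> a \<and> (\<not> unique_argmin x \<or> 1 \<le> a \<or> partial_min 0 a x = gmin x)}"
    using tau_le_iff by (auto simp: space_E_sets)
  also have "\<dots> \<in> sets E_sets" by measurable
  finally show "{x \<in> space E_sets. tau x \<le> a} \<in> sets E_sets" .
qed

section \<open>Conditional expectations and densities\<close>

lemma factorised_RN_deriv_exists: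
  fixes T :: "'a \<Rightarrow> real" and Y :: "'a \<Rightarrow> real"
  assumes "finite_measure M" and [measurable]: "T \<in> borel_measurable M" "Y \<in> borel_measurable M"
  obtains h :: "real \<Rightarrow> ennreal" where "h \<in> borel_measurable borel"
    "\<And>A. A \<in> sets borel \<Longrightarrow>
       (\<integral>\<^sup>+ x. ennreal (Y x) * indicator A (T x) \<partial>M) = (\<integral>\<^sup>+ x. h (T x) * indicator A (T x) \<partial>M)"
proof -
  interpret finite_measure M by fact
  define \<nu> where "\<nu> = distr M borel T"
  define N where "N = distr (density M (\<lambda>x. ennreal (Y x))) borel T"
  interpret \<nu>: finite_measure \<nu> unfolding \<nu>_def by (rule finite_measure_distr) simp
  have emeasure_N: "emeasure N A = (\<integral>\<^sup>+ x. ennreal (Y x) * indicator A (T x) \<partial>M)"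
    if [measurable]: "A \<in> sets borel" for A
  proof -
    have "emeasure N A = (\<integral>\<^sup>+ x. ennreal (Y x) * indicator (T -` A \<inter> space M) x \<partial>M)"
      unfolding N_def by (subst emeasure_distr) (auto simp: emeasure_density)
    also have "\<dots> = (\<integral>\<^sup>+ x. ennreal (Y x) * indicator A (T x) \<partial>M)"
      by (rule nn_integral_cong) (auto split: split_indicator)
    finally show ?thesis .
  qed
  have "absolutely_continuous \<nu> N"
    unfolding absolutely_continuous_def
  proof
    fix A assume "A \<in> null_sets \<nu>"
    then have [measurable]: "A \<in> sets borel" and "T -` A \<inter> space M \<in> null_sets M"
      by (auto simp: \<nu>_def null_sets_def emeasure_distr)
    then have "AE x in M. x \<notin> T -` A \<inter> space M" by (intro AE_not_in)
    then have "AE x in M. ennreal (Y x) * indicator A (T x) = 0"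
      by (rule AE_mp) (intro AE_I2, auto split: split_indicator)
    then show "A \<in> null_sets N"
      using emeasure_N by (auto simp: N_def null_sets_def nn_integral_0_iff_AE)
  qed
  moreover have "sets N = sets \<nu>" by (simp add: N_def \<nu>_def)
  ultimately have density_RN: "density \<nu> (RN_deriv \<nu> N) = N"
    by (rule \<nu>.density_RN_deriv)
  define h where "h r = RN_deriv \<nu> N r" for r
  have h_meas [measurable]: "h \<in> borel_measurable borel"
    using borel_measurable_RN_deriv[of \<nu> N] by (simp add: h_def[abs_def] \<nu>_def)
  have nn_integral_h: "(\<integral>\<^sup>+ x. ennreal (Y x) * indicator A (T x) \<partial>M) =
      (\<integral>\<^sup>+ x. h (T x) * indicator A (T x) \<partial>M)" if [measurable]: "A \<in> sets borel" for A
  proof -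
    have "(\<integral>\<^sup>+ x. ennreal (Y x) * indicator A (T x) \<partial>M) = emeasure (density \<nu> h) A"
      using emeasure_N density_RN by (simp add: h_def[abs_def])
    also have "\<dots> = (\<integral>\<^sup>+ x. h (T x) * indicator A (T x) \<partial>M)"
      by (simp add: emeasure_density \<nu>_def nn_integral_distr)
    finally show ?thesis .
  qed
  from h_meas nn_integral_h show ?thesis by (rule that)
qed

lemma nonneg_factorised_cond_exp_exists:
  fixes T :: "'a \<Rightarrow> real" and Y :: "'a \<Rightarrow> real"
  assumes "finite_measure M"
    and [measurable]: "T \<in> borel_measurable M" "Y \<in> borel_measurable M"
    and "integrable M Y" and Y_nonneg: "\<And>x. 0 \<le> Y x"
  obtains c where "c \<in> borel_measurable borel" "integrable M (\<lambda>x. c (T x))"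
    "\<And>A. A \<in> sets borel \<Longrightarrow>
       (\<integral>x. indicator A (T x) * Y x \<partial>M) = (\<integral>x. indicator A (T x) * c (T x) \<partial>M)"
proof -
  obtain h :: "real \<Rightarrow> ennreal" where [measurable]: "h \<in> borel_measurable borel"
    and nn_integral_h: "\<And>A. A \<in> sets borel \<Longrightarrow>
      (\<integral>\<^sup>+ x. ennreal (Y x) * indicator A (T x) \<partial>M) = (\<integral>\<^sup>+ x. h (T x) * indicator A (T x) \<partial>M)"
    using factorised_RN_deriv_exists[OF assms(1-3)] by blast
  have "(\<integral>\<^sup>+ x. h (T x) \<partial>M) = (\<integral>\<^sup>+ x. ennreal (Y x) \<partial>M)"
    using nn_integral_h[of UNIV] by simp
  also have "\<dots> = ennreal (\<integral>x. Y x \<partial>M)"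
    using assms Y_nonneg by (intro nn_integral_eq_integral) auto
  finally have finite: "(\<integral>\<^sup>+ x. h (T x) \<partial>M) < \<infinity>" by simp
  then have "AE x in M. h (T x) \<noteq> \<infinity>" by (intro nn_integral_PInf_AE) auto
  then have h_real: "AE x in M. ennreal (enn2real (h (T x))) = h (T x)"
    by eventually_elim (simp add: less_top)
  define c where "c r = enn2real (h r)" for r
  have c_meas [measurable]: "c \<in> borel_measurable borel" unfolding c_def[abs_def] by measurable
  have c_int: "integrable M (\<lambda>x. c (T x))"
  proof (rule integrableI_bounded)
    have "(\<integral>\<^sup>+ x. norm (c (T x)) \<partial>M) = (\<integral>\<^sup>+ x. h (T x) \<partial>M)"
      using h_real by (intro nn_integral_cong_AE) (auto simp: c_def)
    with finite show "(\<integral>\<^sup>+ x. norm (c (T x)) \<partial>M) < \<infinity>" by simp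
  qed measurable
  show ?thesis
  proof (rule that[OF c_meas c_int])
    fix A :: "real set" assume [measurable]: "A \<in> sets borel"
    have int_Y: "integrable M (\<lambda>x. indicator A (T x) * Y x)"
      by (rule Bochner_Integration.integrable_bound[OF \<open>integrable M Y\<close>])
        (auto split: split_indicator)
    have int_c: "integrable M (\<lambda>x. indicator A (T x) * c (T x))"
      by (rule Bochner_Integration.integrable_bound[OF c_int]) (auto split: split_indicator)
    have "ennreal (\<integral>x. indicator A (T x) * Y x \<partial>M) =
        (\<integral>\<^sup>+ x. ennreal (Y x) * indicator A (T x) \<partial>M)"
      using int_Y Y_nonneg
      by (subst nn_integral_eq_integral[symmetric]) (auto intro!: nn_integral_cong split: split_indicator)
    also have "\<dots> = (\<integral>\<^sup>+ x. ennreal (indicator A (T x) * c (T x)) \<partial>M)"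
      unfolding nn_integral_h[OF \<open>A \<in> sets borel\<close>]
      using h_real by (intro nn_integral_cong_AE) (auto simp: c_def split: split_indicator)
    also have "\<dots> = ennreal (\<integral>x. indicator A (T x) * c (T x) \<partial>M)"
      using int_c by (intro nn_integral_eq_integral) (auto simp: c_def)
    finally show "(\<integral>x. indicator A (T x) * Y x \<partial>M) = (\<integral>x. indicator A (T x) * c (T x) \<partial>M)"
      using int_Y int_c Y_nonneg
      by (subst (asm) ennreal_inj) (auto intro!: integral_nonneg simp: c_def)
  qed
qed

lemma factorised_cond_exp_exists:
  fixes T :: "'a \<Rightarrow> real" and Y :: "'a \<Rightarrow> real"
  assumes "finite_measure M" and [measurable]: "T \<in> borel_measurable M" and "integrable M Y"
  obtains c where "c \<in> borel_measurable borel" "integrable M (\<lambda>x. c (T x))"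
    "\<And>A. A \<in> sets borel \<Longrightarrow>
       (\<integral>x. indicator A (T x) * Y x \<partial>M) = (\<integral>x. indicator A (T x) * c (T x) \<partial>M)"
proof -
  have [measurable]: "Y \<in> borel_measurable M" using \<open>integrable M Y\<close> by simp
  obtain cp where cp [measurable]: "cp \<in> borel_measurable borel" and "integrable M (\<lambda>x. cp (T x))"
    and cp_eq: "\<And>A. A \<in> sets borel \<Longrightarrow> (\<integral>x. indicator A (T x) * max 0 (Y x) \<partial>M) =
                   (\<integral>x. indicator A (T x) * cp (T x) \<partial>M)"
    by (rule nonneg_factorised_cond_exp_exists[of M T "\<lambda>x. max 0 (Y x)"])
      (use assms in \<open>auto intro: integrable_max\<close>)
  obtain cn where cn [measurable]: "cn \<in> borel_measurable borel" and "integrable M (\<lambda>x. cn (T x))"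
    and cn_eq: "\<And>A. A \<in> sets borel \<Longrightarrow> (\<integral>x. indicator A (T x) * max 0 (- Y x) \<partial>M) =
                   (\<integral>x. indicator A (T x) * cn (T x) \<partial>M)"
    by (rule nonneg_factorised_cond_exp_exists[of M T "\<lambda>x. max 0 (- Y x)"])
      (use assms in \<open>auto intro: integrable_max\<close>)
  show ?thesis
  proof (rule that[of "\<lambda>r. cp r - cn r"])
    show "integrable M (\<lambda>x. cp (T x) - cn (T x))"
      using \<open>integrable M (\<lambda>x. cp (T x))\<close> \<open>integrable M (\<lambda>x. cn (T x))\<close> by simp
    fix A :: "real set" assume [measurable]: "A \<in> sets borel"
    have int: "integrable M (\<lambda>x. indicator A (T x) * f x)"
      if "integrable M f" for f :: "'a \<Rightarrow> real"
      using that by (rule Bochner_Integration.integrable_bound)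
        (use that in \<open>auto split: split_indicator\<close>)
    have "(\<integral>x. indicator A (T x) * Y x \<partial>M) = (\<integral>x. indicator A (T x) * max 0 (Y x) -
        indicator A (T x) * max 0 (- Y x) \<partial>M)"
      by (intro Bochner_Integration.integral_cong) (auto simp: max_def)
    also have "\<dots> = (\<integral>x. indicator A (T x) * cp (T x) - indicator A (T x) * cn (T x) \<partial>M)"
      using int \<open>integrable M Y\<close> \<open>integrable M (\<lambda>x. cp (T x))\<close> \<open>integrable M (\<lambda>x. cn (T x))\<close>
      by (simp add: cp_eq cn_eq integrable_max)
    finally show "(\<integral>x. indicator A (T x) * Y x \<partial>M) = (\<integral>x. indicator A (T x) * (cp (T x) - cn (T x)) \<partial>M)"
      by (simp add: right_diff_distrib)
  qed measurable
qed

lemma emeasure_density_eq_integral: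
  fixes k :: "real \<Rightarrow> real"
  assumes [measurable]: "S \<in> sets borel" "k \<in> borel_measurable borel"
    and "\<And>r. 0 \<le> k r" and "integrable lborel (\<lambda>r. k r * indicator S r)"
  shows "emeasure (density lborel (\<lambda>r. ennreal (k r))) S = ennreal (\<integral>r. k r * indicator S r \<partial>lborel)"
proof -
  have "emeasure (density lborel (\<lambda>r. ennreal (k r))) S = (\<integral>\<^sup>+ r. ennreal (k r * indicator S r) \<partial>lborel)"
    by (auto simp: emeasure_density intro!: nn_integral_cong split: split_indicator)
  also have "\<dots> = ennreal (\<integral>r. k r * indicator S r \<partial>lborel)"
    using assms by (intro nn_integral_eq_integral) auto
  finally show ?thesis .
qed

text \<open>The positive and negative parts of \<open>h\<close> on \<open>(b, 0)\<close> define measures that agree on all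
  half-lines, hence coincide.\<close>

lemma AE_zero_on_Ioo_if_integrals_Ioo_zero:
  fixes h :: "real \<Rightarrow> real"
  assumes [measurable]: "h \<in> borel_measurable borel"
    and h_int: "integrable lborel (\<lambda>r. indicator {b<..<0} r * h r)"
    and h_zero: "\<And>a. b \<le> a \<Longrightarrow> a < 0 \<Longrightarrow> (\<integral>r. indicator {a<..<0} r * h r \<partial>lborel) = 0"
  shows "AE r in lborel. r \<in> {b<..<0} \<longrightarrow> h r = 0"
proof -
  define hp where "hp r = indicator {b<..<0} r * max 0 (h r)" for r
  define hn where "hn r = indicator {b<..<0} r * max 0 (- h r)" for r
  have [measurable]: "hp \<in> borel_measurable borel" "hn \<in> borel_measurable borel"
    unfolding hp_def[abs_def] hn_def[abs_def] by measurable
  have int_hp: "integrable lborel (\<lambda>r. hp r * indicator {x<..} r)" for x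
    by (rule Bochner_Integration.integrable_bound[OF h_int]) (auto simp: hp_def split: split_indicator)
  have int_hn: "integrable lborel (\<lambda>r. hn r * indicator {x<..} r)" for x
    by (rule Bochner_Integration.integrable_bound[OF h_int]) (auto simp: hn_def split: split_indicator)
  have integral_hp_hn: "(\<integral>r. hp r * indicator {x<..} r \<partial>lborel) = (\<integral>r. hn r * indicator {x<..} r \<partial>lborel)"
    for x
  proof -
    have "(\<integral>r. hp r * indicator {x<..} r \<partial>lborel) - (\<integral>r. hn r * indicator {x<..} r \<partial>lborel)
        = (\<integral>r. hp r * indicator {x<..} r - hn r * indicator {x<..} r \<partial>lborel)"
      using int_hp int_hn by simp
    also have "\<dots> = (\<integral>r. indicator {max b x<..<0} r * h r \<partial>lborel)"
      by (intro Bochner_Integration.integral_cong) (auto simp: hp_def hn_def max_def split: split_indicator)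
    also have "\<dots> = 0"
      by (cases "max b x < 0") (auto intro: h_zero)
    finally show ?thesis by simp
  qed
  have "density lborel (\<lambda>r. ennreal (hp r)) = density lborel (\<lambda>r. ennreal (hn r))"
  proof (rule measure_eqI_lessThan)
    fix x
    show "emeasure (density lborel (\<lambda>r. ennreal (hp r))) {x<..} < \<infinity>"
      using emeasure_density_eq_integral[of "{x<..}" hp] int_hp by (simp add: hp_def)
    show "emeasure (density lborel (\<lambda>r. ennreal (hp r))) {x<..} =
        emeasure (density lborel (\<lambda>r. ennreal (hn r))) {x<..}"
      using emeasure_density_eq_integral[of "{x<..}" hp] emeasure_density_eq_integral[of "{x<..}" hn]
        int_hp int_hn integral_hp_hn
      by (simp add: hp_def hn_def)
  qed auto
  then have "AE r in lborel. ennreal (hp r) = ennreal (hn r)"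
    by (intro sigma_finite_measure.density_unique[OF sigma_finite_lborel]) auto
  then show ?thesis
    by eventually_elim (auto simp: hp_def hn_def max_def split: if_splits)
qed

lemma AE_zero_on_negative_if_integrals_Ioo_zero:
  fixes h :: "real \<Rightarrow> real"
  assumes [measurable]: "h \<in> borel_measurable borel"
    and "\<And>b. integrable lborel (\<lambda>r. indicator {b<..<0} r * h r)"
    and "\<And>a. a < 0 \<Longrightarrow> (\<integral>r. indicator {a<..<0} r * h r \<partial>lborel) = 0"
  shows "AE r in lborel. r < 0 \<longrightarrow> h r = 0"
proof -
  have "AE r in lborel. \<forall>n::nat. r \<in> {- real n<..<0} \<longrightarrow> h r = 0"
    using AE_zero_on_Ioo_if_integrals_Ioo_zero assms by (subst AE_all_countable) blast
  then show ?thesis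
  proof eventually_elim
    case (elim r)
    obtain n :: nat where "- r < real n" using reals_Archimedean2 by blast
    then show ?case using elim[rule_format, of n] by auto
  qed
qed

lemma set_integral_gmin_preimage:
  fixes k :: "(real \<Rightarrow> real) \<Rightarrow> real"
  shows "(LINT x:{x\<in>space M. gmin x \<in> A}|M. k x) = (\<integral>x. indicator A (gmin x) * k x \<partial>M)"
  unfolding set_lebesgue_integral_def
  by (intro Bochner_Integration.integral_cong) (auto split: split_indicator)

lemma cond_exp_version_AE_cong:
  assumes "cond_exp_version M Y c" and [measurable]: "c' \<in> borel_measurable borel"
    and [measurable]: "gmin \<in> borel_measurable M"
    and AE_eq: "AE x in M. c' (gmin x) = c (gmin x)"
  shows "cond_exp_version M Y c'"
  unfolding cond_exp_version_def
proof (intro conjI ballI)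
  have [measurable]: "c \<in> borel_measurable borel" and "integrable M (\<lambda>x. c (gmin x))"
    using assms(1) by (simp_all add: cond_exp_version_def)
  with AE_eq show "integrable M (\<lambda>x. c' (gmin x))"
    by (subst integrable_cong_AE[where g="\<lambda>x. c (gmin x)"]) auto
  fix A :: "real set" assume [measurable]: "A \<in> sets borel"
  have "(\<integral>x. indicator A (gmin x) * c' (gmin x) \<partial>M) = (\<integral>x. indicator A (gmin x) * c (gmin x) \<partial>M)"
    using AE_eq by (intro integral_cong_AE) auto
  with assms(1) show "(LINT x:{x\<in>space M. gmin x \<in> A}|M. Y x) = (LINT x:{x\<in>space M. gmin x \<in> A}|M. c' (gmin x))"
    by (simp add: cond_exp_version_def set_integral_gmin_preimage)
qed (fact)

section \<open>Differentiable functionals and the regularised indicator\<close>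

lemma C1b_bounded: "C1b \<phi> D\<phi> \<Longrightarrow> \<exists>B. \<forall>x\<in>C01. \<bar>\<phi> x\<bar> \<le> B"
  by (simp add: C1b_def)

lemma C1b_derivative_bounded: "C1b \<phi> D\<phi> \<Longrightarrow> \<exists>C. \<forall>x\<in>C01. \<forall>z\<in>C01. \<bar>D\<phi> x z\<bar> \<le> C * supn z"
  by (simp add: C1b_def)

lemma C1b_frechet:
  "C1b \<phi> D\<phi> \<Longrightarrow> x \<in> C01 \<Longrightarrow> 0 < \<epsilon> \<Longrightarrow> \<exists>\<delta>>0. \<forall>h\<in>C01. supn h < \<delta> \<longrightarrow>
     \<bar>\<phi> (\<lambda>t. x t + h t) - \<phi> x - D\<phi> x h\<bar> \<le> \<epsilon> * supn h"
  unfolding C1b_def by blast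

lemma C1b_derivative_continuous:
  "C1b \<phi> D\<phi> \<Longrightarrow> x \<in> C01 \<Longrightarrow> 0 < \<epsilon> \<Longrightarrow> \<exists>\<delta>>0. \<forall>y\<in>C01. supn (\<lambda>t. y t - x t) < \<delta> \<longrightarrow>
     (\<forall>z\<in>C01. \<bar>D\<phi> y z - D\<phi> x z\<bar> \<le> \<epsilon> * supn z)"
  unfolding C1b_def by blast

lemma measurable_C1b:
  assumes "C1b \<phi> D\<phi>"
  shows "\<phi> \<in> borel_measurable E_sets"
proof (rule borel_measurable_E_sets_sup_continuous)
  fix x and e :: real assume x: "x \<in> C01" and "0 < e"
  obtain C where C: "\<And>y. y \<in> C01 \<Longrightarrow> \<bar>D\<phi> x y\<bar> \<le> C * supn y"
    using C1b_derivative_bounded[OF assms] x by blast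
  obtain \<delta> where "0 < \<delta>" and \<delta>: "\<And>h. h \<in> C01 \<Longrightarrow> supn h < \<delta> \<Longrightarrow>
      \<bar>\<phi> (\<lambda>t. x t + h t) - \<phi> x - D\<phi> x h\<bar> \<le> 1 * supn h"
    using C1b_frechet[OF assms x, of 1] by auto
  define d where "d = min \<delta> (e / (\<bar>C\<bar> + 2))"
  show "\<exists>d>0. \<forall>y\<in>C01. supn (\<lambda>t. y t - x t) < d \<longrightarrow> \<bar>\<phi> y - \<phi> x\<bar> < e"
  proof (intro exI[of _ d] conjI ballI impI)
    show "0 < d" using \<open>0 < \<delta>\<close> \<open>0 < e\<close> by (simp add: d_def)
    fix y assume y: "y \<in> C01" and "supn (\<lambda>t. y t - x t) < d"
    define h where "h t = y t - x t" for t
    have h: "h \<in> C01" "0 \<le> supn h" "supn h < \<delta>" "supn h < e / (\<bar>C\<bar> + 2)"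
      using C01_diff[OF x y] supn_nonneg[of h] \<open>supn (\<lambda>t. y t - x t) < d\<close>
      by (auto simp: h_def[abs_def] d_def)
    have "\<bar>\<phi> y - \<phi> x - D\<phi> x h\<bar> \<le> supn h"
      using \<delta>[OF h(1,3)] by (simp add: h_def)
    moreover have "\<bar>D\<phi> x h\<bar> \<le> \<bar>C\<bar> * supn h"
      using C[OF h(1)] mult_right_mono[OF abs_ge_self h(2), of C] by linarith
    ultimately have "\<bar>\<phi> y - \<phi> x\<bar> \<le> (\<bar>C\<bar> + 2) * supn h"
      using h(2) by (simp add: algebra_simps)
    also have "\<dots> < e"
      using h(4) by (simp add: field_simps)
    finally show "\<bar>\<phi> y - \<phi> x\<bar> < e" .
  qed
qed

lemma measurable_C1b_derivative:
  assumes "C1b \<phi> D\<phi>" and z: "z \<in> C01"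
  shows "(\<lambda>x. D\<phi> x z) \<in> borel_measurable E_sets"
proof (rule borel_measurable_E_sets_sup_continuous)
  fix x and e :: real assume x: "x \<in> C01" and "0 < e"
  have "0 \<le> supn z" by (rule supn_nonneg[OF z])
  with \<open>0 < e\<close> obtain \<delta> where "0 < \<delta>" and \<delta>: "\<And>y. y \<in> C01 \<Longrightarrow> supn (\<lambda>t. y t - x t) < \<delta> \<Longrightarrow>
      \<bar>D\<phi> y z - D\<phi> x z\<bar> \<le> e / (supn z + 1) * supn z"
    using C1b_derivative_continuous[OF assms(1) x, of "e / (supn z + 1)"] z by auto
  have "e / (supn z + 1) * supn z < e"
    using \<open>0 < e\<close> \<open>0 \<le> supn z\<close> by (simp add: field_simps)
  with \<delta> \<open>0 < \<delta>\<close> show "\<exists>d>0. \<forall>y\<in>C01. supn (\<lambda>t. y t - x t) < d \<longrightarrow> \<bar>D\<phi> y z - D\<phi> x z\<bar> < e"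
    by (meson le_less_trans)
qed

definition ramp :: "real \<Rightarrow> real \<Rightarrow> real" where
  "ramp b s = min (max s b) 0"

lemma lipschitz_ramp: "1-lipschitz_on UNIV (ramp b)"
  by (rule lipschitz_onI) (auto simp: ramp_def dist_real_def min_def max_def abs_if)

lemma measurable_ramp [measurable]: "ramp b \<in> borel_measurable borel"
  unfolding ramp_def[abs_def] by measurable

lemma abs_ramp_le: "b < 0 \<Longrightarrow> \<bar>ramp b s\<bar> \<le> - b"
  by (auto simp: ramp_def min_def max_def)

lemma has_real_derivative_ramp:
  assumes "b < 0" "s \<notin> {b, 0}"
  shows "(ramp b has_real_derivative indicator {b<..<0} s) (at s)"
proof -
  consider "s < b" | "b < s" "s < 0" | "0 < s" using assms by fastforce
  then show ?thesis
  proof cases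
    case 1
    have "((\<lambda>_. b) has_real_derivative 0) (at s)" by (rule DERIV_const)
    then have "(ramp b has_real_derivative 0) (at s)"
      by (rule has_field_derivative_transform_within_open[of _ _ _ "{..<b}"])
        (use 1 assms in \<open>auto simp: ramp_def\<close>)
    then show ?thesis using 1 by simp
  next
    case 2
    have "((\<lambda>x. x) has_real_derivative 1) (at s)" by (rule DERIV_ident)
    then have "(ramp b has_real_derivative 1) (at s)"
      by (rule has_field_derivative_transform_within_open[of _ _ _ "{b<..<0}"])
        (use 2 in \<open>auto simp: ramp_def\<close>)
    then show ?thesis using 2 by simp
  next
    case 3
    have "((\<lambda>_. 0) has_real_derivative 0) (at s)" by (rule DERIV_const)
    then have "(ramp b has_real_derivative 0) (at s)"
      by (rule has_field_derivative_transform_within_open[of _ _ _ "{0<..}"])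
        (use 3 assms in \<open>auto simp: ramp_def\<close>)
    then show ?thesis using 3 by simp
  qed
qed

lemma indicator_Ioo_times_less:
  fixes b s r :: real
  shows "indicator {b<..<0} r * (if s < r then 1 else 0) = (indicator {max b s<..<0} r :: real)"
  by (auto split: split_indicator simp: max_def)

lemma integral_ramp:
  fixes b s c :: real
  shows "(\<integral>r. c * (indicator {b<..<0} r * (if s < r then 1 else 0)) \<partial>lborel) = c * - ramp b s"
  by (cases "max b s \<le> 0") (auto simp: indicator_Ioo_times_less ramp_def max.commute)

section \<open>Integration by parts against the minimum\<close>

lemma integrable_bounded_factor:
  fixes g h :: "'a \<Rightarrow> real"
  assumes "integrable M g" "h \<in> borel_measurable M" "\<And>x. x \<in> space M \<Longrightarrow> \<bar>h x\<bar> \<le> B"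
  shows "integrable M (\<lambda>x. g x * h x)"
proof (rule Bochner_Integration.integrable_bound[of _ "\<lambda>x. B * g x"])
  show "AE x in M. norm (g x * h x) \<le> norm (B * g x)"
  proof (rule AE_I2)
    fix x assume "x \<in> space M"
    then have "\<bar>h x\<bar> \<le> \<bar>B\<bar>" using assms(3) by fastforce
    then show "norm (g x * h x) \<le> norm (B * g x)"
      using mult_left_mono[of "\<bar>h x\<bar>" "\<bar>B\<bar>" "\<bar>g x\<bar>"] by (simp add: abs_mult mult.commute)
  qed
qed (use assms in auto)

locale min_functional_ibp =
  fixes \<mu> :: "(real \<Rightarrow> real) measure" and e :: "nat \<Rightarrow> real \<Rightarrow> real" and lam :: "nat \<Rightarrow> real"
    and \<rho> :: "real \<Rightarrow> real"
    and \<phi> :: "(real \<Rightarrow> real) \<Rightarrow> real" and D\<phi> :: "(real \<Rightarrow> real) \<Rightarrow> (real \<Rightarrow> real) \<Rightarrow> real"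
    and z :: "real \<Rightarrow> real" and W :: "(real \<Rightarrow> real) \<Rightarrow> real"
  assumes gaussian: "gaussian_on_E \<mu> e lam" and H2: "H2 \<mu> e lam \<rho>" and C1b: "C1b \<phi> D\<phi>"
    and z_CM: "z \<in> CM e lam" and W_QW: "is_QW \<mu> e lam z W"
begin

sublocale prob_space \<mu>
  using gaussian by (simp add: gaussian_on_E_def)

lemma space_eq: "space \<mu> = C01"
  using gaussian by (simp add: gaussian_on_E_def)

lemma measurable_from_E_sets:
  fixes h :: "(real \<Rightarrow> real) \<Rightarrow> real"
  assumes "h \<in> borel_measurable E_sets"
  shows "h \<in> borel_measurable \<mu>"
proof -
  have "sets \<mu> = sets E_sets" using gaussian by (simp add: gaussian_on_E_def)
  with assms show ?thesis by (simp cong: measurable_cong_sets)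
qed

lemma z_C01: "z \<in> C01"
  using z_CM by (simp add: CM_def)

lemma measurable_gmin_\<mu> [measurable]: "gmin \<in> borel_measurable \<mu>"
  by (rule measurable_from_E_sets) simp

lemma measurable_z_tau [measurable]: "(\<lambda>x. z (tau x)) \<in> borel_measurable \<mu>"
  by (rule measurable_from_E_sets)
    (rule measurable_compose[OF measurable_tau C01_borel_measurable[OF z_C01]])

lemma measurable_\<phi> [measurable]: "\<phi> \<in> borel_measurable \<mu>"
  by (rule measurable_from_E_sets[OF measurable_C1b[OF C1b]])

lemma measurable_D\<phi>_z [measurable]: "(\<lambda>x. D\<phi> x z) \<in> borel_measurable \<mu>"
  by (rule measurable_from_E_sets[OF measurable_C1b_derivative[OF C1b z_C01]])

lemma measurable_W [measurable]: "W \<in> borel_measurable \<mu>"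
  using W_QW by (simp add: is_QW_def)

lemma measurable_\<rho> [measurable]: "\<rho> \<in> borel_measurable borel"
  using H2 by (simp add: H2_def)

lemma \<rho>_nonneg: "0 \<le> \<rho> r"
  using H2 by (simp add: H2_def)

lemma emeasure_gmin_nonpos:
  "A \<in> sets borel \<Longrightarrow> A \<subseteq> {..0} \<Longrightarrow>
   emeasure \<mu> {x\<in>space \<mu>. gmin x \<in> A} = (\<integral>\<^sup>+ r. ennreal (\<rho> r) * indicator A r \<partial>lborel)"
  using H2 by (simp add: H2_def)

lemma integration_by_parts:
  assumes "C1b \<psi> D\<psi>" and "L-lipschitz_on UNIV \<theta>" and "\<theta>' \<in> borel_measurable borel"
    and "N \<in> null_sets lborel" and "\<And>s. s \<notin> N \<Longrightarrow> (\<theta> has_real_derivative \<theta>' s) (at s)"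
    and "AE x in \<mu>. gmin x \<notin> N"
  shows "(\<integral>x. D\<psi> x z * \<theta> (gmin x) + \<psi> x * \<theta>' (gmin x) * z (tau x) \<partial>\<mu>) =
    (\<integral>x. W x * \<psi> x * \<theta> (gmin x) \<partial>\<mu>)"
  using H2 assms z_CM W_QW unfolding H2_def by blast

lemma \<phi>_bounded: obtains B where "\<And>x. x \<in> space \<mu> \<Longrightarrow> \<bar>\<phi> x\<bar> \<le> B"
  using C1b_bounded[OF C1b] by (auto simp: space_eq)

lemma D\<phi>_z_bounded: obtains K where "\<And>x. x \<in> space \<mu> \<Longrightarrow> \<bar>D\<phi> x z\<bar> \<le> K"
  using C1b_derivative_bounded[OF C1b] z_C01 by (auto simp: space_eq)

lemma abs_z_tau_le: "\<bar>z (tau x)\<bar> \<le> supn z"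
  by (rule abs_le_supn[OF z_C01 tau_in_unit_interval])

lemma integrable_W: "integrable \<mu> W"
  using W_QW square_integrable_imp_integrable[OF measurable_W] by (simp add: is_QW_def)

definition Y :: "(real \<Rightarrow> real) \<Rightarrow> real" where
  "Y x = z (tau x) * \<phi> x"

definition f :: "(real \<Rightarrow> real) \<Rightarrow> real" where
  "f x = D\<phi> x z - W x * \<phi> x"

definition F :: "real \<Rightarrow> real" where
  "F r = - (LINT x:{x\<in>space \<mu>. gmin x \<ge> r}|\<mu>. f x)"

lemma measurable_Y [measurable]: "Y \<in> borel_measurable \<mu>"
  unfolding Y_def[abs_def] by measurable

lemma measurable_f [measurable]: "f \<in> borel_measurable \<mu>"
  unfolding f_def[abs_def] by measurable

lemma integrable_W_\<phi>: "integrable \<mu> (\<lambda>x. W x * \<phi> x)"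
proof -
  obtain B where "\<And>x. x \<in> space \<mu> \<Longrightarrow> \<bar>\<phi> x\<bar> \<le> B" using \<phi>_bounded by blast
  then show ?thesis by (intro integrable_bounded_factor[OF integrable_W]) auto
qed

lemma integrable_D\<phi>_z: "integrable \<mu> (\<lambda>x. D\<phi> x z)"
proof -
  obtain K where "\<And>x. x \<in> space \<mu> \<Longrightarrow> \<bar>D\<phi> x z\<bar> \<le> K" using D\<phi>_z_bounded by blast
  then have "integrable \<mu> (\<lambda>x. 1 * D\<phi> x z)"
    by (intro integrable_bounded_factor) auto
  then show ?thesis by simp
qed

lemma integrable_f: "integrable \<mu> f"
  unfolding f_def[abs_def] using integrable_D\<phi>_z integrable_W_\<phi> by simp

lemma integrable_Y: "integrable \<mu> Y"
proof -
  obtain B where "\<And>x. x \<in> space \<mu> \<Longrightarrow> \<bar>\<phi> x\<bar> \<le> B" using \<phi>_bounded by blast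
  moreover have "integrable \<mu> (\<lambda>x. 1 * z (tau x))"
    using abs_z_tau_le by (intro integrable_bounded_factor) auto
  ultimately show ?thesis
    unfolding Y_def[abs_def] by (intro integrable_bounded_factor) auto
qed

lemma distr_gmin_restricted_eq_density:
  "density (distr \<mu> borel gmin) (\<lambda>r. ennreal (indicator {..0} r)) =
   density lborel (\<lambda>r. ennreal (\<rho> r * indicator {..0} r))"
proof (rule measure_eqI)
  fix A assume "A \<in> sets (density (distr \<mu> borel gmin) (\<lambda>r. ennreal (indicator {..0} r)))"
  then have [measurable]: "A \<in> sets borel" by simp
  have "emeasure (density (distr \<mu> borel gmin) (\<lambda>r. ennreal (indicator {..0} r))) A =
      (\<integral>\<^sup>+ r. ennreal (indicator {..0} r) * indicator A r \<partial>distr \<mu> borel gmin)"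
    by (rule emeasure_density) auto
  also have "\<dots> = (\<integral>\<^sup>+ r. indicator (A \<inter> {..0}) r \<partial>distr \<mu> borel gmin)"
    by (intro nn_integral_cong) (auto split: split_indicator)
  also have "\<dots> = emeasure \<mu> (gmin -` (A \<inter> {..0}) \<inter> space \<mu>)"
    by (simp add: emeasure_distr)
  also have "gmin -` (A \<inter> {..0}) \<inter> space \<mu> = {x\<in>space \<mu>. gmin x \<in> A \<inter> {..0}}"
    by auto
  also have "emeasure \<mu> \<dots> = (\<integral>\<^sup>+ r. ennreal (\<rho> r) * indicator (A \<inter> {..0}) r \<partial>lborel)"
    by (rule emeasure_gmin_nonpos) auto
  also have "\<dots> = (\<integral>\<^sup>+ r. ennreal (\<rho> r * indicator {..0} r) * indicator A r \<partial>lborel)"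
    by (intro nn_integral_cong) (auto split: split_indicator)
  also have "\<dots> = emeasure (density lborel (\<lambda>r. ennreal (\<rho> r * indicator {..0} r))) A"
    by (rule emeasure_density[symmetric]) auto
  finally show "emeasure (density (distr \<mu> borel gmin) (\<lambda>r. ennreal (indicator {..0} r))) A =
      emeasure (density lborel (\<lambda>r. ennreal (\<rho> r * indicator {..0} r))) A" .
qed simp

lemma
  fixes h :: "real \<Rightarrow> real"
  assumes [measurable]: "h \<in> borel_measurable borel"
  shows integrable_gmin_nonpos_iff:
      "integrable \<mu> (\<lambda>x. indicator {..0} (gmin x) * h (gmin x)) \<longleftrightarrow>
       integrable lborel (\<lambda>r. \<rho> r * indicator {..0} r * h r)"
    and integral_gmin_nonpos:
      "(\<integral>x. indicator {..0} (gmin x) * h (gmin x) \<partial>\<mu>) = (\<integral>r. \<rho> r * indicator {..0} r * h r \<partial>lborel)"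
proof -
  let ?L = "density (distr \<mu> borel gmin) (\<lambda>r. ennreal (indicator {..0} r))"
  let ?R = "density lborel (\<lambda>r. ennreal (\<rho> r * indicator {..0} r))"
  have nonneg: "AE r in lborel. 0 \<le> \<rho> r * indicator {..0} r"
    by (intro AE_I2) (simp add: \<rho>_nonneg)
  have "integrable ?L h \<longleftrightarrow> integrable (distr \<mu> borel gmin) (\<lambda>r. indicator {..0} r *\<^sub>R h r)"
    by (rule integrable_density) auto
  also have "\<dots> \<longleftrightarrow> integrable \<mu> (\<lambda>x. indicator {..0} (gmin x) * h (gmin x))"
    by (subst integrable_distr_eq) auto
  finally have L: "integrable ?L h \<longleftrightarrow> integrable \<mu> (\<lambda>x. indicator {..0} (gmin x) * h (gmin x))" .
  have R: "integrable ?R h \<longleftrightarrow> integrable lborel (\<lambda>r. \<rho> r * indicator {..0} r * h r)"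
    using nonneg by (subst integrable_density) auto
  show "integrable \<mu> (\<lambda>x. indicator {..0} (gmin x) * h (gmin x)) \<longleftrightarrow>
       integrable lborel (\<lambda>r. \<rho> r * indicator {..0} r * h r)"
    using L R distr_gmin_restricted_eq_density by simp
  have "integral\<^sup>L ?L h = integral\<^sup>L (distr \<mu> borel gmin) (\<lambda>r. indicator {..0} r *\<^sub>R h r)"
    by (rule integral_density) auto
  also have "\<dots> = (\<integral>x. indicator {..0} (gmin x) * h (gmin x) \<partial>\<mu>)"
    by (subst integral_distr) auto
  finally have L: "integral\<^sup>L ?L h = (\<integral>x. indicator {..0} (gmin x) * h (gmin x) \<partial>\<mu>)" .
  have R: "integral\<^sup>L ?R h = (\<integral>r. \<rho> r * indicator {..0} r * h r \<partial>lborel)"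
    using nonneg by (subst integral_density) auto
  show "(\<integral>x. indicator {..0} (gmin x) * h (gmin x) \<partial>\<mu>) =
      (\<integral>r. \<rho> r * indicator {..0} r * h r \<partial>lborel)"
    using L R distr_gmin_restricted_eq_density by simp
qed

lemma AE_gmin_not_in:
  assumes [measurable]: "A \<in> sets borel" and "A \<subseteq> {..0}"
    and "AE r in lborel. r \<in> A \<longrightarrow> \<rho> r = 0"
  shows "AE x in \<mu>. gmin x \<notin> A"
proof -
  have "AE r in lborel. ennreal (\<rho> r) * indicator A r = 0"
    using assms(3) by eventually_elim (simp split: split_indicator)
  then have "emeasure \<mu> {x\<in>space \<mu>. gmin x \<in> A} = 0"
    using emeasure_gmin_nonpos[of A] assms(2) by (simp add: nn_integral_0_iff_AE)
  then show ?thesis by (subst AE_iff_measurable[of "{x\<in>space \<mu>. gmin x \<in> A}"]) auto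
qed

lemma AE_gmin_neq:
  assumes "r \<le> 0"
  shows "AE x in \<mu>. gmin x \<noteq> r"
proof -
  have "AE s in lborel. s \<notin> {r}"
    by (rule AE_not_in[OF countable_imp_null_set_lborel]) simp
  then have "AE s in lborel. s \<in> {r} \<longrightarrow> \<rho> s = 0" by eventually_elim simp
  then show ?thesis using AE_gmin_not_in[of "{r}"] assms by simp
qed

lemma integral_f_eq_0: "(\<integral>x. f x \<partial>\<mu>) = 0"
proof -
  have "0-lipschitz_on UNIV (\<lambda>_. 1::real)" by (rule lipschitz_onI) auto
  then have "(\<integral>x. D\<phi> x z * 1 + \<phi> x * 0 * z (tau x) \<partial>\<mu>) = (\<integral>x. W x * \<phi> x * 1 \<partial>\<mu>)"
    by (rule integration_by_parts[OF C1b, where N="{}"]) auto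
  then show ?thesis
    unfolding f_def[abs_def] using integrable_D\<phi>_z integrable_W_\<phi> by simp
qed

lemma F_eq_integral_below: "F r = (\<integral>x. indicator {x\<in>space \<mu>. gmin x < r} x * f x \<partial>\<mu>)"
proof -
  have "(\<integral>x. indicator {x\<in>space \<mu>. gmin x < r} x * f x \<partial>\<mu>) =
      (\<integral>x. f x - indicator {x\<in>space \<mu>. r \<le> gmin x} x * f x \<partial>\<mu>)"
    by (intro Bochner_Integration.integral_cong) (auto split: split_indicator)
  also have "\<dots> = - (\<integral>x. indicator {x\<in>space \<mu>. r \<le> gmin x} x * f x \<partial>\<mu>)"
    using integrable_f integrable_mult_indicator[of "{x\<in>space \<mu>. r \<le> gmin x}" \<mu> f]
    by (subst Bochner_Integration.integral_diff) (auto simp: integral_f_eq_0)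
  finally show ?thesis by (simp add: F_def set_lebesgue_integral_def)
qed

lemma integral_Ioo_Y_eq_ramp:
  assumes "b < 0"
  shows "(\<integral>x. indicator {b<..<0} (gmin x) * Y x \<partial>\<mu>) = - (\<integral>x. f x * ramp b (gmin x) \<partial>\<mu>)"
proof -
  have "AE x in \<mu>. gmin x \<noteq> b" "AE x in \<mu>. gmin x \<noteq> 0"
    using AE_gmin_neq assms by auto
  then have "AE x in \<mu>. gmin x \<notin> {b, 0}" by eventually_elim auto
  then have ibp: "(\<integral>x. D\<phi> x z * ramp b (gmin x) + \<phi> x * indicator {b<..<0} (gmin x) * z (tau x) \<partial>\<mu>) =
      (\<integral>x. W x * \<phi> x * ramp b (gmin x) \<partial>\<mu>)"
    using has_real_derivative_ramp[OF assms]
    by (intro integration_by_parts[OF C1b lipschitz_ramp, where N="{b, 0}"])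
      (auto intro: countable_imp_null_set_lborel)
  have ramp_bounded: "\<And>x. \<bar>ramp b (gmin x)\<bar> \<le> - b"
    using abs_ramp_le[OF assms] .
  have int_D: "integrable \<mu> (\<lambda>x. D\<phi> x z * ramp b (gmin x))"
    using ramp_bounded by (intro integrable_bounded_factor[OF integrable_D\<phi>_z]) auto
  have int_W: "integrable \<mu> (\<lambda>x. W x * \<phi> x * ramp b (gmin x))"
    using ramp_bounded by (intro integrable_bounded_factor[OF integrable_W_\<phi>]) auto
  have int_Y: "integrable \<mu> (\<lambda>x. Y x * indicator {b<..<0} (gmin x))"
    by (intro integrable_bounded_factor[OF integrable_Y]) (auto split: split_indicator)
  have "(\<integral>x. indicator {b<..<0} (gmin x) * Y x \<partial>\<mu>) =
      (\<integral>x. W x * \<phi> x * ramp b (gmin x) \<partial>\<mu>) - (\<integral>x. D\<phi> x z * ramp b (gmin x) \<partial>\<mu>)"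
    using ibp int_D int_Y by (simp add: Y_def mult_ac)
  also have "\<dots> = - (\<integral>x. f x * ramp b (gmin x) \<partial>\<mu>)"
    using int_D int_W by (simp add: f_def left_diff_distrib)
  finally show ?thesis .
qed

lemma integral_Ioo_Y_eq_integral_F:
  assumes "b < 0"
  shows "(\<integral>x. indicator {b<..<0} (gmin x) * Y x \<partial>\<mu>) = (\<integral>r. indicator {b<..<0} r * F r \<partial>lborel)"
proof -
  interpret pair_sigma_finite \<mu> lborel ..
  define k where "k x r = f x * (indicator {b<..<0} r * (if gmin x < r then 1 else 0 :: real))" for x r
  have [measurable]: "(\<lambda>(x, r). k x r) \<in> borel_measurable (\<mu> \<Otimes>\<^sub>M lborel)"
    unfolding k_def by measurable
  have k_int: "integrable (\<mu> \<Otimes>\<^sub>M lborel) (\<lambda>(x, r). k x r)"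
  proof (rule Fubini_integrable)
    have "(\<integral>r. norm (k x r) \<partial>lborel) = \<bar>f x\<bar> * - ramp b (gmin x)" for x
      unfolding integral_ramp[symmetric] k_def
      by (intro Bochner_Integration.integral_cong) (auto simp: abs_mult split: split_indicator)
    moreover have "integrable \<mu> (\<lambda>x. \<bar>f x\<bar> * - ramp b (gmin x))"
      using integrable_f abs_ramp_le[OF assms] by (intro integrable_bounded_factor) auto
    ultimately show "integrable \<mu> (\<lambda>x. \<integral>r. norm ((\<lambda>(x, r). k x r) (x, r)) \<partial>lborel)"
      by simp
    have "integrable lborel (\<lambda>r. f x * indicator {max b (gmin x)<..<0} r)" for x
      by (cases "max b (gmin x) \<le> 0") (auto intro!: integrable_real_indicator)
    then show "AE x in \<mu>. integrable lborel (\<lambda>r. (\<lambda>(x, r). k x r) (x, r))"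
      by (simp add: k_def indicator_Ioo_times_less)
  qed measurable
  have "(\<integral>x. indicator {b<..<0} (gmin x) * Y x \<partial>\<mu>) = (\<integral>x. f x * - ramp b (gmin x) \<partial>\<mu>)"
    using integral_Ioo_Y_eq_ramp[OF assms] by simp
  also have "\<dots> = (\<integral>x. (\<integral>r. k x r \<partial>lborel) \<partial>\<mu>)"
    by (simp only: k_def integral_ramp)
  also have "\<dots> = (\<integral>r. (\<integral>x. k x r \<partial>\<mu>) \<partial>lborel)"
    by (rule Fubini_integral[symmetric, OF k_int])
  also have "\<dots> = (\<integral>r. indicator {b<..<0} r * F r \<partial>lborel)"
    unfolding F_eq_integral_below k_def
    by (intro Bochner_Integration.integral_cong) (auto simp: mult_ac intro!: Bochner_Integration.integral_cong split: split_indicator)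
  finally show ?thesis .
qed

lemma continuous_on_F: "continuous_on {..<0} F"
proof (rule continuous_on_sequentiallyI)
  fix u :: "nat \<Rightarrow> real" and a assume "a \<in> {..<0}" and u: "u \<longlonglongrightarrow> a"
  have "(\<lambda>n. \<integral>x. indicator {x\<in>space \<mu>. gmin x < u n} x * f x \<partial>\<mu>) \<longlonglongrightarrow>
      (\<integral>x. indicator {x\<in>space \<mu>. gmin x < a} x * f x \<partial>\<mu>)"
  proof (rule integral_dominated_convergence[where w="\<lambda>x. \<bar>f x\<bar>"])
    show "integrable \<mu> (\<lambda>x. \<bar>f x\<bar>)" using integrable_f by simp
    show "AE x in \<mu>. norm (indicator {x\<in>space \<mu>. gmin x < u n} x * f x) \<le> \<bar>f x\<bar>" for n
      by (intro AE_I2) (auto split: split_indicator)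
    have "AE x in \<mu>. gmin x \<noteq> a" using \<open>a \<in> {..<0}\<close> by (intro AE_gmin_neq) simp
    then show "AE x in \<mu>. (\<lambda>n. indicator {x\<in>space \<mu>. gmin x < u n} x * f x) \<longlonglongrightarrow>
        indicator {x\<in>space \<mu>. gmin x < a} x * f x"
    proof eventually_elim
      case (elim x)
      have "eventually (\<lambda>n. (gmin x < u n) = (gmin x < a)) sequentially"
      proof (cases "gmin x < a")
        case True
        with order_tendstoD(1)[OF u True] show ?thesis by (auto elim: eventually_mono)
      next
        case False
        with elim have "a < gmin x" by linarith
        with order_tendstoD(2)[OF u this] show ?thesis by (auto elim: eventually_mono)
      qed
      then show ?case
        by (rule tendsto_eventually[OF eventually_mono]) (simp add: indicator_def)
    qed
  qed measurable
  then show "(\<lambda>n. F (u n)) \<longlonglongrightarrow> F a" by (simp add: F_eq_integral_below)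
qed

lemma abs_F_le: "\<bar>F r\<bar> \<le> (\<integral>x. \<bar>f x\<bar> \<partial>\<mu>)"
proof -
  have "\<bar>F r\<bar> \<le> (\<integral>x. \<bar>indicator {x\<in>space \<mu>. gmin x < r} x * f x\<bar> \<partial>\<mu>)"
    unfolding F_eq_integral_below by (rule integral_abs_bound)
  also have "\<dots> \<le> (\<integral>x. \<bar>f x\<bar> \<partial>\<mu>)"
    using integrable_f integrable_mult_indicator[of "{x\<in>space \<mu>. gmin x < r}" \<mu> f]
    by (intro integral_mono) (auto split: split_indicator)
  finally show ?thesis .
qed

text \<open>\<open>F\<close> is only known to be continuous on the negative half-line; cutting it off there
  gives a Borel function.\<close>

definition F_neg :: "real \<Rightarrow> real" where
  "F_neg r = indicator {..<0} r * F r"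

lemma measurable_F_neg [measurable]: "F_neg \<in> borel_measurable borel"
  using borel_measurable_continuous_on_indicator[OF _ continuous_on_F]
  by (simp add: F_neg_def[abs_def])

lemma indicator_Ioo_F_neg: "indicator {b<..<0} r * F_neg r = indicator {b<..<0} r * F r"
  by (simp add: F_neg_def split: split_indicator)

lemma integrable_indicator_Ioo_F_neg: "integrable lborel (\<lambda>r. indicator {b<..<0} r * F_neg r)"
proof (rule Bochner_Integration.integrable_bound)
  show "integrable lborel (\<lambda>r. (\<integral>x. \<bar>f x\<bar> \<partial>\<mu>) * indicator {b<..<0} r)"
    by (cases "b \<le> 0") (auto intro: integrable_real_indicator)
  show "AE r in lborel. norm (indicator {b<..<0} r * F_neg r) \<le> norm ((\<integral>x. \<bar>f x\<bar> \<partial>\<mu>) * indicator {b<..<0} r)"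
    using abs_F_le by (intro AE_I2) (auto simp: F_neg_def split: split_indicator)
qed simp

lemma integral_Ioo_cond_exp_version:
  assumes "cond_exp_version \<mu> Y c"
  shows "integrable lborel (\<lambda>r. indicator {b<..<0} r * (c r * \<rho> r))"
    and "(\<integral>r. indicator {b<..<0} r * (c r * \<rho> r) \<partial>lborel) = (\<integral>x. indicator {b<..<0} (gmin x) * Y x \<partial>\<mu>)"
proof -
  have [measurable]: "c \<in> borel_measurable borel" and "integrable \<mu> (\<lambda>x. c (gmin x))"
    using assms by (simp_all add: cond_exp_version_def)
  have eq_\<mu>: "(\<lambda>x. indicator {..0} (gmin x) * (indicator {b<..<0} (gmin x) * c (gmin x))) =
      (\<lambda>x. c (gmin x) * indicator {b<..<0} (gmin x))"
    by (auto simp: fun_eq_iff split: split_indicator)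
  have eq_lborel: "(\<lambda>r. \<rho> r * indicator {..0} r * (indicator {b<..<0} r * c r)) =
      (\<lambda>r. indicator {b<..<0} r * (c r * \<rho> r))"
    by (auto simp: fun_eq_iff split: split_indicator)
  have "integrable \<mu> (\<lambda>x. c (gmin x) * indicator {b<..<0} (gmin x))"
    using \<open>integrable \<mu> (\<lambda>x. c (gmin x))\<close>
    by (rule integrable_bounded_factor) (auto split: split_indicator)
  then show "integrable lborel (\<lambda>r. indicator {b<..<0} r * (c r * \<rho> r))"
    using integrable_gmin_nonpos_iff[of "\<lambda>r. indicator {b<..<0} r * c r"]
    unfolding eq_\<mu> eq_lborel by simp
  have "(\<integral>r. indicator {b<..<0} r * (c r * \<rho> r) \<partial>lborel) =
      (\<integral>x. c (gmin x) * indicator {b<..<0} (gmin x) \<partial>\<mu>)"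
    using integral_gmin_nonpos[of "\<lambda>r. indicator {b<..<0} r * c r"]
    unfolding eq_\<mu> eq_lborel by simp
  also have "\<dots> = (\<integral>x. indicator {b<..<0} (gmin x) * c (gmin x) \<partial>\<mu>)"
    by (simp add: mult.commute)
  also have "\<dots> = (\<integral>x. indicator {b<..<0} (gmin x) * Y x \<partial>\<mu>)"
    using assms by (simp add: cond_exp_version_def set_integral_gmin_preimage)
  finally show "(\<integral>r. indicator {b<..<0} r * (c r * \<rho> r) \<partial>lborel) = (\<integral>x. indicator {b<..<0} (gmin x) * Y x \<partial>\<mu>)" .
qed

lemma cond_exp_version_times_density:
  assumes "cond_exp_version \<mu> Y c"
  shows "AE r in lborel. r < 0 \<longrightarrow> c r * \<rho> r = F r"
proof -
  have [measurable]: "c \<in> borel_measurable borel"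
    using assms by (simp add: cond_exp_version_def)
  note int_c\<rho> = integral_Ioo_cond_exp_version[OF assms]
  have "AE r in lborel. r < 0 \<longrightarrow> c r * \<rho> r - F_neg r = 0"
  proof (rule AE_zero_on_negative_if_integrals_Ioo_zero)
    show "integrable lborel (\<lambda>r. indicator {b<..<0} r * (c r * \<rho> r - F_neg r))" for b
      using int_c\<rho>(1) integrable_indicator_Ioo_F_neg by (simp add: right_diff_distrib)
    fix a :: real assume "a < 0"
    have "(\<integral>r. indicator {a<..<0} r * (c r * \<rho> r) \<partial>lborel) = (\<integral>r. indicator {a<..<0} r * F_neg r \<partial>lborel)"
      unfolding int_c\<rho>(2) integral_Ioo_Y_eq_integral_F[OF \<open>a < 0\<close>] indicator_Ioo_F_neg ..
    then show "(\<integral>r. indicator {a<..<0} r * (c r * \<rho> r - F_neg r) \<partial>lborel) = 0"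
      using int_c\<rho>(1) integrable_indicator_Ioo_F_neg by (simp add: right_diff_distrib)
  qed measurable
  then show ?thesis by eventually_elim (simp add: F_neg_def)
qed

lemma cond_exp_version_exists: obtains c where "cond_exp_version \<mu> Y c"
proof -
  obtain c where "c \<in> borel_measurable borel" "integrable \<mu> (\<lambda>x. c (gmin x))"
    "\<And>A. A \<in> sets borel \<Longrightarrow>
       (\<integral>x. indicator A (gmin x) * Y x \<partial>\<mu>) = (\<integral>x. indicator A (gmin x) * c (gmin x) \<partial>\<mu>)"
    using factorised_cond_exp_exists[OF finite_measure_axioms measurable_gmin_\<mu> integrable_Y] by blast
  then have "cond_exp_version \<mu> Y c"
    by (simp add: cond_exp_version_def set_integral_gmin_preimage)
  then show ?thesis by (rule that)
qed

lemma cond_exp_version_change_where_density_vanishes: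
  assumes c0: "cond_exp_version \<mu> Y c0" and [measurable]: "c \<in> borel_measurable borel"
    and "\<And>r. 0 \<le> r \<Longrightarrow> c r = c0 r"
    and "AE r in lborel. r < 0 \<and> c r \<noteq> c0 r \<longrightarrow> \<rho> r = 0"
  shows "cond_exp_version \<mu> Y c"
proof (rule cond_exp_version_AE_cong[OF c0])
  have [measurable]: "c0 \<in> borel_measurable borel"
    using c0 by (simp add: cond_exp_version_def)
  have "{r. r < 0 \<and> c r \<noteq> c0 r} \<in> sets borel" by measurable
  then have "AE x in \<mu>. gmin x \<notin> {r. r < 0 \<and> c r \<noteq> c0 r}"
    using assms(4) by (intro AE_gmin_not_in) auto
  then show "AE x in \<mu>. c (gmin x) = c0 (gmin x)"
    by eventually_elim (use assms(3) in \<open>auto simp: not_less\<close>)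
qed measurable

text \<open>A version of the conditional expectation can be changed freely on \<open>{\<rho> = 0}\<close>, and the
  density \<open>\<rho>\<close> on a Lebesgue null set; this turns the a.e. identity into a pointwise one.\<close>

lemma cond_exp_version_times_modified_density:
  "\<exists>c \<rho>'. cond_exp_version \<mu> Y c \<and> (AE r in lborel. \<rho>' r = \<rho> r) \<and> (\<forall>r<0. c r * \<rho>' r = F r)"
proof -
  obtain c0 where c0: "cond_exp_version \<mu> Y c0" by (rule cond_exp_version_exists)
  have [measurable]: "c0 \<in> borel_measurable borel"
    using c0 by (simp add: cond_exp_version_def)
  have c0_\<rho>: "AE r in lborel. r < 0 \<longrightarrow> c0 r * \<rho> r = F r"
    by (rule cond_exp_version_times_density[OF c0])
  define \<rho>' where "\<rho>' r = (if r < 0 \<and> \<rho> r = 0 \<and> F_neg r \<noteq> 0 then 1 else \<rho> r)" for r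
  define c where "c r = (if r < 0 then (if \<rho>' r = 0 then 0 else F_neg r / \<rho>' r) else c0 r)" for r
  have c_meas [measurable]: "c \<in> borel_measurable borel"
    unfolding c_def[abs_def] \<rho>'_def[abs_def] by measurable
  have "c r * \<rho>' r = F r" if "r < 0" for r
  proof (cases "\<rho>' r = 0")
    case True
    then have "F_neg r = 0" using that by (auto simp: \<rho>'_def split: if_splits)
    with True that show ?thesis by (simp add: F_neg_def)
  next
    case False
    with that show ?thesis by (simp add: c_def F_neg_def)
  qed
  moreover have "AE r in lborel. \<rho>' r = \<rho> r"
    using c0_\<rho> by eventually_elim (auto simp: \<rho>'_def F_neg_def)
  moreover have "cond_exp_version \<mu> Y c"
  proof (rule cond_exp_version_change_where_density_vanishes[OF c0 c_meas])
    show "AE r in lborel. r < 0 \<and> c r \<noteq> c0 r \<longrightarrow> \<rho> r = 0"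
      using c0_\<rho>
    proof eventually_elim
      case (elim r)
      show ?case
      proof (rule impI, rule ccontr)
        assume "r < 0 \<and> c r \<noteq> c0 r" and "\<rho> r \<noteq> 0"
        then have "r < 0" "c r \<noteq> c0 r" by simp_all
        moreover have "c r = F r / \<rho> r"
          using \<open>r < 0\<close> \<open>\<rho> r \<noteq> 0\<close> by (simp add: c_def \<rho>'_def F_neg_def)
        moreover have "c0 r = F r / \<rho> r"
          using elim \<open>r < 0\<close> \<open>\<rho> r \<noteq> 0\<close> by (simp add: eq_divide_eq)
        ultimately show False by simp
      qed
    qed
  qed (simp add: c_def)
  ultimately show ?thesis by blast
qed

lemma conditional_density_formula:
  "continuous_on {..<0} (\<lambda>r. - (LINT x:{x\<in>space \<mu>. gmin x \<ge> r}|\<mu>. D\<phi> x z - W x * \<phi> x))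
   \<and> (\<exists>c \<rho>'. cond_exp_version \<mu> (\<lambda>x. z (tau x) * \<phi> x) c
        \<and> (AE r in lborel. \<rho>' r = \<rho> r)
        \<and> (\<forall>r<0. c r * \<rho>' r = - (LINT x:{x\<in>space \<mu>. gmin x \<ge> r}|\<mu>. D\<phi> x z - W x * \<phi> x)))
   \<and> (\<forall>c. cond_exp_version \<mu> (\<lambda>x. z (tau x) * \<phi> x) c \<longrightarrow>
        (AE r in lborel. r < 0 \<longrightarrow> c r * \<rho> r = - (LINT x:{x\<in>space \<mu>. gmin x \<ge> r}|\<mu>. D\<phi> x z - W x * \<phi> x)))"
proof -
  have F: "\<And>r. - (LINT x:{x\<in>space \<mu>. gmin x \<ge> r}|\<mu>. D\<phi> x z - W x * \<phi> x) = F r"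
    by (simp add: F_def f_def)
  have Y: "(\<lambda>x. z (tau x) * \<phi> x) = Y"
    by (simp add: fun_eq_iff Y_def)
  have "continuous_on {..<0} (\<lambda>r. F r)"
    using continuous_on_F by (simp add: eta_contract_eq)
  then show ?thesis
    unfolding F Y using cond_exp_version_times_modified_density cond_exp_version_times_density
    by blast
qed

end

theorem proposition4p5:
  fixes \<mu> :: "(real \<Rightarrow> real) measure"
    and e :: "nat \<Rightarrow> real \<Rightarrow> real" and lam :: "nat \<Rightarrow> real"
    and \<rho> :: "real \<Rightarrow> real"
    and \<phi> :: "(real \<Rightarrow> real) \<Rightarrow> real" and D\<phi> :: "(real \<Rightarrow> real) \<Rightarrow> (real \<Rightarrow> real) \<Rightarrow> real"
    and z :: "real \<Rightarrow> real" and W :: "(real \<Rightarrow> real) \<Rightarrow> real"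
  assumes "covariance_data e lam"
    and "gaussian_on_E \<mu> e lam"
    and "CM_in_E e lam"
    and "H2 \<mu> e lam \<rho>"
    and "C1b \<phi> D\<phi>"
    and "z \<in> CM e lam"
    and "is_QW \<mu> e lam z W"
  defines "F \<equiv> (\<lambda>r. - (LINT x:{x\<in>space \<mu>. gmin x \<ge> r}|\<mu>. D\<phi> x z - W x * \<phi> x))"
  shows "continuous_on {..<0} F
    \<and> (\<exists>c \<rho>'. cond_exp_version \<mu> (\<lambda>x. z (tau x) * \<phi> x) c
              \<and> (AE r in lborel. \<rho>' r = \<rho> r)
              \<and> (\<forall>r<0. c r * \<rho>' r = F r))
    \<and> (\<forall>c. cond_exp_version \<mu> (\<lambda>x. z (tau x) * \<phi> x) c \<longrightarrow>
              (AE r in lborel. r < 0 \<longrightarrow> c r * \<rho> r = F r))"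
proof -
  \<comment> \<open>The covariance and Cameron--Martin hypotheses enter only through the integration by
    parts formula, which (H2) already provides.\<close>
  have "min_functional_ibp \<mu> e lam \<rho> \<phi> D\<phi> z W"
    using assms(2,4-7) by (rule min_functional_ibp.intro)
  then show ?thesis
    unfolding F_def by (rule min_functional_ibp.conditional_density_formula)
qed

end
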